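(* Let $\Sigma$ be an oriented piecewise smooth surface with position vector $X$. Then on $\Sigma^*$, $$\nabla\cdot J(X\times\xi)^T=2\gamma+\Lambda q,$$ and, if $\Lambda$ is constant on $\Sigma^*$, $$\nabla\cdot(d\xi+\Lambda I)J(X\times\xi)^T=\frac{2qK_\Sigma}{K_W}+\Lambda\gamma.$$
   Context: $\Sigma^*$ is the union of the smooth faces of $\Sigma$, $\nu$ its unit normal, $\nabla\cdot$ the surface divergence, $(\cdot)^T$ the tangential part, $J=\nu\times\cdot$ rotation by $90^\circ$ in the tangent plane, $I$ the identity. $\gamma$ is a positive $C^3$ function on $S^2$ (and $\gamma$ on $\Sigma^*$ means $\gamma\circ\nu$), $D\gamma$ its gradient on $S^2$, $\tilde\gamma$ its degree-one homogeneous extension; $\xi=\nabla\tilde\gamma(\nu)=D\gamma_\nu+\gamma\nu$ is the Cahn–Hoffman field, $d\xi$ regarded as an endomorphism of the tangent plane, $\Lambda=-\nabla\cdot\xi$ the anisotropic mean curvature, $q=X\cdot\nu$ the support function, $K_\Sigma$ the Gauss curvature of $\Sigma$, and $K_W=1/\det(D^2\gamma+\gamma I)$ at $\nu$, so $K_\Sigma/K_W=\det d\xi$. *)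

theory Defs
  imports "HOL-Analysis.Analysis"
begin

unbundle cross3_syntax

definition pd :: "('a::euclidean_space \<Rightarrow> 'b::real_normed_vector) \<Rightarrow> 'a \<Rightarrow> 'a \<Rightarrow> 'b" where
  "pd f e x = frechet_derivative f (at x) e"

fun Ck :: "nat \<Rightarrow> 'a::euclidean_space set \<Rightarrow> ('a \<Rightarrow> 'b::real_normed_vector) \<Rightarrow> bool" where
  "Ck 0 U f = continuous_on U f"
| "Ck (Suc k) U f = (f differentiable_on U \<and> continuous_on U f \<and>
      (\<forall>e\<in>Basis. Ck k U (\<lambda>x. pd f e x)))"

definition smooth_on :: "'a::euclidean_space set \<Rightarrow> ('a \<Rightarrow> 'b::real_normed_vector) \<Rightarrow> bool" where
  "smooth_on U f = (\<forall>k. Ck k U f)"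

definition Xd :: "(real^2 \<Rightarrow> real^3) \<Rightarrow> 2 \<Rightarrow> real^2 \<Rightarrow> real^3" where
  "Xd X i p = pd X (axis i 1) p"

definition gmat :: "(real^2 \<Rightarrow> real^3) \<Rightarrow> real^2 \<Rightarrow> real^2^2" where
  "gmat X p = (\<chi> i j. Xd X i p \<bullet> Xd X j p)"

definition ginv :: "(real^2 \<Rightarrow> real^3) \<Rightarrow> real^2 \<Rightarrow> real^2^2" where
  "ginv X p = matrix_inv (gmat X p)"

definition nu :: "(real^2 \<Rightarrow> real^3) \<Rightarrow> real^2 \<Rightarrow> real^3" where
  "nu X p = (1 / norm (Xd X 1 p \<times> Xd X 2 p)) *\<^sub>R (Xd X 1 p \<times> Xd X 2 p)"

definition sdiv :: "(real^2 \<Rightarrow> real^3) \<Rightarrow> (real^2 \<Rightarrow> real^3) \<Rightarrow> real^2 \<Rightarrow> real" where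
  "sdiv X V p = (\<Sum>i\<in>UNIV. \<Sum>j\<in>UNIV. ginv X p $ i $ j * (pd V (axis i 1) p \<bullet> Xd X j p))"

definition tanpart :: "(real^2 \<Rightarrow> real^3) \<Rightarrow> real^2 \<Rightarrow> real^3 \<Rightarrow> real^3" where
  "tanpart X p w = w - (w \<bullet> nu X p) *\<^sub>R nu X p"

definition Jrot :: "(real^2 \<Rightarrow> real^3) \<Rightarrow> real^2 \<Rightarrow> real^3 \<Rightarrow> real^3" where
  "Jrot X p w = nu X p \<times> w"

definition supp :: "(real^2 \<Rightarrow> real^3) \<Rightarrow> real^2 \<Rightarrow> real" where
  "supp X p = X p \<bullet> nu X p"

definition gauss_curv :: "(real^2 \<Rightarrow> real^3) \<Rightarrow> real^2 \<Rightarrow> real" where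
  "gauss_curv X p = det (\<chi> i j. - (pd (nu X) (axis i 1) p \<bullet> Xd X j p)) / det (gmat X p)"

text \<open>The function gamma on S^2 is represented by gam (only its values on the unit sphere matter).\<close>

definition gam0 :: "(real^3 \<Rightarrow> real) \<Rightarrow> real^3 \<Rightarrow> real" where
  "gam0 gam x = gam ((1 / norm x) *\<^sub>R x)"

definition gamt :: "(real^3 \<Rightarrow> real) \<Rightarrow> real^3 \<Rightarrow> real" where
  "gamt gam x = norm x * gam ((1 / norm x) *\<^sub>R x)"

definition grad3 :: "(real^3 \<Rightarrow> real) \<Rightarrow> real^3 \<Rightarrow> real^3" where
  "grad3 f x = (\<chi> k. pd f (axis k 1) x)"

definition hess3 :: "(real^3 \<Rightarrow> real) \<Rightarrow> real^3 \<Rightarrow> real^3^3" where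
  "hess3 f x = (\<chi> i j. pd (\<lambda>y. pd f (axis j 1) y) (axis i 1) x)"

definition projn :: "real^3 \<Rightarrow> real^3^3" where
  "projn n = mat 1 - (\<chi> i j. n $ i * n $ j)"

text \<open>D^2 gamma + gamma I at n, an endomorphism of n^perp (Riemannian Hessian on S^2,
  computed via the degree-zero extension); its determinant on n^perp is the determinant of
  the 3x3 map extended by the identity in direction n.\<close>
definition det_hess_gam :: "(real^3 \<Rightarrow> real) \<Rightarrow> real^3 \<Rightarrow> real" where
  "det_hess_gam gam n = det (projn n ** hess3 (gam0 gam) n ** projn n + gam n *\<^sub>R projn n
                              + (\<chi> i j. n $ i * n $ j))"

definition KW :: "(real^3 \<Rightarrow> real) \<Rightarrow> real^3 \<Rightarrow> real" where
  "KW gam n = 1 / det_hess_gam gam n"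

definition xi :: "(real^3 \<Rightarrow> real) \<Rightarrow> (real^2 \<Rightarrow> real^3) \<Rightarrow> real^2 \<Rightarrow> real^3" where
  "xi gam X p = grad3 (gamt gam) (nu X p)"

definition Lam :: "(real^3 \<Rightarrow> real) \<Rightarrow> (real^2 \<Rightarrow> real^3) \<Rightarrow> real^2 \<Rightarrow> real" where
  "Lam gam X p = - sdiv X (xi gam X) p"

definition dxi_apply :: "(real^3 \<Rightarrow> real) \<Rightarrow> (real^2 \<Rightarrow> real^3) \<Rightarrow> real^2 \<Rightarrow> real^3 \<Rightarrow> real^3" where
  "dxi_apply gam X p w =
     (\<Sum>i\<in>UNIV. (\<Sum>j\<in>UNIV. ginv X p $ i $ j * (w \<bullet> Xd X j p)) *\<^sub>R pd (xi gam X) (axis i 1) p)"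

end

theory Submission
  imports Defs
begin

text \<open>
  Write \<open>n = X\<^sub>1 \<times> X\<^sub>2\<close>.  In the frame \<open>X\<^sub>1, X\<^sub>2\<close> both fields take the form
  \<open>(f X\<^sub>1 - h X\<^sub>2) / |n|\<close>: \<open>J Y\<^sup>T = ((Y \<bullet> X\<^sub>1) X\<^sub>2 - (Y \<bullet> X\<^sub>2) X\<^sub>1) / |n|\<close>, and since
  \<open>d\<xi> + \<Lambda> I = d\<xi> - (tr d\<xi>) I\<close> is minus the adjugate of \<open>d\<xi>\<close>,
  \<open>(d\<xi> + \<Lambda> I) J Y\<^sup>T = ((Y \<bullet> \<xi>\<^sub>2) X\<^sub>1 - (Y \<bullet> \<xi>\<^sub>1) X\<^sub>2) / |n|\<close>.  The divergence of such a
  field is \<open>(\<partial>\<^sub>1 f - \<partial>\<^sub>2 h) / |n|\<close>, and with \<open>f, h\<close> inner products against \<open>X\<^sub>i\<close> or \<open>\<xi>\<^sub>i\<close>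
  the second derivatives cancel by \<open>X\<^sub>1\<^sub>2 = X\<^sub>2\<^sub>1\<close> and \<open>\<xi>\<^sub>1\<^sub>2 = \<xi>\<^sub>2\<^sub>1\<close>.  For
  \<open>Y = X \<times> \<xi>\<close> what remains are triple products: as \<open>\<xi>\<^sub>i = d\<xi>(X\<^sub>i)\<close> is tangent,
  \<open>\<xi>\<^sub>1 \<times> X\<^sub>2 + X\<^sub>1 \<times> \<xi>\<^sub>2 = -\<Lambda> n\<close> and \<open>\<xi>\<^sub>1 \<times> \<xi>\<^sub>2 = (det d\<xi>) n\<close>, while Euler's relation gives
  \<open>\<xi> \<bullet> \<nu> = \<gamma>\<close>.  Finally \<open>d\<xi> = (D\<^sup>2\<gamma> + \<gamma> I) \<circ> d\<nu>\<close> on the tangent plane, whence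
  \<open>det d\<xi> = K\<^sub>\<Sigma> / K\<^sub>W\<close>.
\<close>

unbundle cross3_syntax

section \<open>Calculus of partial derivatives\<close>

lemma has_derivative_pd: "f differentiable (at x) \<Longrightarrow> (f has_derivative (\<lambda>v. pd f v x)) (at x)"
  unfolding pd_def using frechet_derivative_works by (metis eta_contract_eq)

lemma pd_eq: "(f has_derivative f') (at x) \<Longrightarrow> pd f v x = f' v"
  unfolding pd_def using frechet_derivative_at by metis

lemma linear_pd: "f differentiable (at x) \<Longrightarrow> linear (\<lambda>v. pd f v x)"
  using has_derivative_pd has_derivative_linear by blast

lemma pd_scale: "f differentiable (at x) \<Longrightarrow> pd f (c *\<^sub>R v) x = c *\<^sub>R pd f v x"
  using linear_pd linear_scale by blast

lemma pd_cong_open: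
  assumes "open S" "x \<in> S" "\<And>y. y \<in> S \<Longrightarrow> f y = g y"
  shows "pd f v x = pd g v x"
proof -
  have "(f has_derivative D) (at x) \<longleftrightarrow> (g has_derivative D) (at x)" for D
    using has_derivative_transform_within_open[of f D x UNIV S g]
      has_derivative_transform_within_open[of g D x UNIV S f] assms
    by auto
  then show ?thesis unfolding pd_def frechet_derivative_def by simp
qed

lemma differentiable_cong_open:
  assumes "open S" "x \<in> S" "\<And>y. y \<in> S \<Longrightarrow> f y = g y" "f differentiable (at x)"
  shows "g differentiable (at x)"
  using assms unfolding differentiable_def by (metis has_derivative_transform_within_open)

lemma pd_const [simp]: "pd (\<lambda>x. c) v x = 0"
  by (rule pd_eq) (rule has_derivative_const)

lemma pd_ident: "pd (\<lambda>x. x) v x = v"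
  by (rule pd_eq) (rule has_derivative_ident)

lemma pd_add: "f differentiable (at x) \<Longrightarrow> g differentiable (at x) \<Longrightarrow>
    pd (\<lambda>x. f x + g x) v x = pd f v x + pd g v x"
  by (rule pd_eq) (intro has_derivative_add has_derivative_pd)

lemma pd_diff: "f differentiable (at x) \<Longrightarrow> g differentiable (at x) \<Longrightarrow>
    pd (\<lambda>x. f x - g x) v x = pd f v x - pd g v x"
  by (rule pd_eq) (intro has_derivative_diff has_derivative_pd)

lemma pd_minus: "f differentiable (at x) \<Longrightarrow> pd (\<lambda>x. - f x) v x = - pd f v x"
  by (rule pd_eq) (intro has_derivative_minus has_derivative_pd)

lemma pd_bilinear:
  "bounded_bilinear B \<Longrightarrow> f differentiable (at x) \<Longrightarrow> g differentiable (at x) \<Longrightarrow>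
    pd (\<lambda>x. B (f x) (g x)) v x = B (f x) (pd g v x) + B (pd f v x) (g x)"
  by (rule pd_eq) (intro bounded_bilinear.FDERIV has_derivative_pd)

lemma bounded_bilinear_cross: "bounded_bilinear (\<lambda>x y::real^3. x \<times> y)"
  using bilinear_cross bilinear_conv_bounded_bilinear by blast

lemmas pd_mult = pd_bilinear[OF bounded_bilinear_mult]
lemmas pd_scaleR = pd_bilinear[OF bounded_bilinear_scaleR]
lemmas pd_inner = pd_bilinear[OF bounded_bilinear_inner]
lemmas pd_cross = pd_bilinear[OF bounded_bilinear_cross]

lemma differentiable_cross:
  "f differentiable (at x) \<Longrightarrow> g differentiable (at x) \<Longrightarrow> (\<lambda>x. f x \<times> g x) differentiable (at x)"
  unfolding differentiable_def by (blast intro: bounded_bilinear.FDERIV[OF bounded_bilinear_cross])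

lemma pd_chain: "g differentiable (at x) \<Longrightarrow> f differentiable (at (g x)) \<Longrightarrow>
    pd (\<lambda>x. f (g x)) v x = pd f (pd g v x) (g x)"
  by (rule pd_eq) (intro has_derivative_compose[of g _ x UNIV f] has_derivative_pd)

lemma differentiable_nth: "f differentiable (at x) \<Longrightarrow> (\<lambda>y. f y $ k) differentiable (at x)"
  unfolding differentiable_def using bounded_linear.has_derivative[OF bounded_linear_vec_nth] by blast

lemma pd_nth: "f differentiable (at x) \<Longrightarrow> pd (\<lambda>y. f y $ k) v x = pd f v x $ k"
  by (rule pd_eq) (rule bounded_linear.has_derivative[OF bounded_linear_vec_nth has_derivative_pd])

lemma pd_vec:
  fixes F :: "'n::finite \<Rightarrow> 'a::euclidean_space \<Rightarrow> real"
  assumes "\<And>k. F k differentiable (at x)"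
  shows "pd (\<lambda>y. \<chi> k. F k y) v x = (\<chi> k. pd (F k) v x)"
proof (rule pd_eq)
  show "((\<lambda>y. \<chi> k. F k y) has_derivative (\<lambda>v. \<chi> k. pd (F k) v x)) (at x)"
    using has_derivative_pd[OF assms]
    by (subst has_derivative_componentwise_within) (auto simp: Basis_vec_def inner_axis)
qed

lemma pd_norm: "(x::'a::euclidean_space) \<noteq> 0 \<Longrightarrow> pd norm v x = (v \<bullet> x) / norm x"
  using pd_eq[OF has_derivative_norm] by (simp add: sgn_div_norm divide_inverse mult.commute)

lemma pd_expand:
  fixes F :: "'a::euclidean_space \<Rightarrow> 'b::real_normed_vector"
  assumes "F differentiable (at y)"
  shows "pd F v y = (\<Sum>b\<in>Basis. (v \<bullet> b) *\<^sub>R pd F b y)"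
proof -
  have L: "linear (\<lambda>v. pd F v y)" using linear_pd[OF assms] .
  have "pd F v y = pd F (\<Sum>b\<in>Basis. (v \<bullet> b) *\<^sub>R b) y" by (simp add: euclidean_representation)
  also have "\<dots> = (\<Sum>b\<in>Basis. pd F ((v \<bullet> b) *\<^sub>R b) y)" using linear_sum[OF L] by simp
  also have "\<dots> = (\<Sum>b\<in>Basis. (v \<bullet> b) *\<^sub>R pd F b y)" using linear_scale[OF L] by simp
  finally show ?thesis .
qed

lemma pd_expand_axis:
  fixes F :: "real^'n \<Rightarrow> 'b::real_normed_vector"
  assumes "F differentiable (at y)"
  shows "pd F v y = (\<Sum>k\<in>UNIV. v$k *\<^sub>R pd F (axis k 1) y)"
proof -
  have L: "linear (\<lambda>v. pd F v y)" using linear_pd[OF assms] .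
  have "pd F v y = pd F (\<Sum>k\<in>UNIV. v$k *\<^sub>R axis k 1) y"
    using basis_expansion[of v] by (simp add: scalar_mult_eq_scaleR)
  also have "\<dots> = (\<Sum>k\<in>UNIV. pd F (v$k *\<^sub>R axis k 1) y)" using linear_sum[OF L] by simp
  also have "\<dots> = (\<Sum>k\<in>UNIV. v$k *\<^sub>R pd F (axis k 1) y)" using linear_scale[OF L] by simp
  finally show ?thesis .
qed

lemma grad3_inner: "F differentiable (at y) \<Longrightarrow> grad3 F y \<bullet> v = pd F v y"
  using pd_expand_axis[of F y v] by (simp add: grad3_def inner_vec_def mult.commute)

section \<open>Symmetry of second partial derivatives\<close>

lemma has_derivative_difference_along:
  fixes f :: "'a::euclidean_space \<Rightarrow> real"
  assumes "f differentiable (at (a + s *\<^sub>R u))" "f differentiable (at (b + s *\<^sub>R u))"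
  shows "((\<lambda>s. f (a + s *\<^sub>R u) - f (b + s *\<^sub>R u)) has_derivative
          (\<lambda>t. t * (pd f u (a + s *\<^sub>R u) - pd f u (b + s *\<^sub>R u)))) (at s within T)"
proof -
  have line: "((\<lambda>s. c + s *\<^sub>R u) has_derivative (\<lambda>t. t *\<^sub>R u)) (at s within T)" for c
    by (auto intro!: derivative_eq_intros)
  show ?thesis
    using has_derivative_diff[OF has_derivative_compose[OF line has_derivative_pd[OF assms(1)]]
        has_derivative_compose[OF line has_derivative_pd[OF assms(2)]]]
      pd_scale[OF assms(1)] pd_scale[OF assms(2)]
    by (simp add: right_diff_distrib)
qed

lemma second_difference_mvt:
  fixes f :: "'a::euclidean_space \<Rightarrow> real"
  assumes df: "\<And>y. y \<in> S \<Longrightarrow> f differentiable (at y)" and h: "0 < h"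
    and inS: "\<And>s t. 0 \<le> s \<Longrightarrow> s \<le> h \<Longrightarrow> 0 \<le> t \<Longrightarrow> t \<le> h \<Longrightarrow> p + s *\<^sub>R u + t *\<^sub>R w \<in> S"
  obtains \<theta> where "0 < \<theta>" "\<theta> < h"
    "f (p + h *\<^sub>R u + h *\<^sub>R w) - f (p + h *\<^sub>R u) - f (p + h *\<^sub>R w) + f p
       = h * (pd f u (p + \<theta> *\<^sub>R u + h *\<^sub>R w) - pd f u (p + \<theta> *\<^sub>R u + 0 *\<^sub>R w))"
proof -
  define \<phi> where "\<phi> = (\<lambda>s. f ((p + h *\<^sub>R w) + s *\<^sub>R u) - f (p + s *\<^sub>R u))"
  have "(\<phi> has_derivative (\<lambda>t. t * (pd f u ((p + h *\<^sub>R w) + s *\<^sub>R u) - pd f u (p + s *\<^sub>R u))))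
          (at s within {0..h})" if "s \<in> {0..h}" for s
    unfolding \<phi>_def
  proof (rule has_derivative_difference_along)
    show "f differentiable (at ((p + h *\<^sub>R w) + s *\<^sub>R u))"
      using df inS[of s h] that h by (simp add: algebra_simps)
    show "f differentiable (at (p + s *\<^sub>R u))"
      using df inS[of s 0] that h by simp
  qed
  then obtain \<theta> where "\<theta> \<in> {0<..<h}"
    "\<phi> h - \<phi> 0 = h * (pd f u ((p + h *\<^sub>R w) + \<theta> *\<^sub>R u) - pd f u (p + \<theta> *\<^sub>R u))"
    using mvt_simple[of 0 h \<phi> "\<lambda>s t. t * (pd f u ((p + h *\<^sub>R w) + s *\<^sub>R u) - pd f u (p + s *\<^sub>R u))"] h
    by auto
  then show ?thesis
    by (intro that[of \<theta>]) (auto simp: \<phi>_def algebra_simps)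
qed

lemma linearization_difference_bound:
  fixes g :: "'a::real_normed_vector \<Rightarrow> real"
  assumes G: "linear G" and e: "e \<ge> 0" and \<theta>: "0 \<le> \<theta>" "\<theta> \<le> h"
    and small: "h * norm u + h * norm w < \<delta>"
    and rem: "\<And>x. norm (x - p) < \<delta> \<Longrightarrow> \<bar>g x - g p - G (x - p)\<bar> \<le> e * norm (x - p)"
  shows "\<bar>g (p + \<theta> *\<^sub>R u + h *\<^sub>R w) - g (p + \<theta> *\<^sub>R u) - h * G w\<bar> \<le> e * h * (2 * norm u + norm w)"
proof -
  define q1 where "q1 = p + \<theta> *\<^sub>R u + h *\<^sub>R w"
  define q0 where "q0 = p + \<theta> *\<^sub>R u"
  have n1: "norm (q1 - p) \<le> h * norm u + h * norm w"
  proof -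
    have "norm (q1 - p) \<le> \<theta> * norm u + h * norm w"
      unfolding q1_def using norm_triangle_ineq[of "\<theta> *\<^sub>R u" "h *\<^sub>R w"] \<theta> by (simp add: add.assoc)
    also have "\<dots> \<le> h * norm u + h * norm w" using \<theta> by (simp add: mult_right_mono)
    finally show ?thesis .
  qed
  have n0: "norm (q0 - p) \<le> h * norm u"
    using \<theta> unfolding q0_def by (simp add: mult_right_mono)
  have r1: "\<bar>g q1 - g p - G (q1 - p)\<bar> \<le> e * (h * norm u + h * norm w)"
    using rem[of q1] n1 small e by (simp add: order.trans[OF _ mult_left_mono])
  have r0: "\<bar>g q0 - g p - G (q0 - p)\<bar> \<le> e * (h * norm u)"
  proof -
    have "norm (q0 - p) < \<delta>" using n0 small \<theta> by (smt (verit) mult_nonneg_nonneg norm_ge_zero)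
    then show ?thesis using rem[of q0] n0 e by (simp add: order.trans[OF _ mult_left_mono])
  qed
  have "G (q1 - p) - G (q0 - p) = h * G w"
    using linear_diff[OF G, of "q1 - p" "q0 - p"] linear_scale[OF G, of h w]
    unfolding q1_def q0_def by simp
  then have "\<bar>g q1 - g q0 - h * G w\<bar> \<le> e * h * (2 * norm u + norm w)"
    using r1 r0 by (simp add: algebra_simps)
  then show ?thesis unfolding q1_def q0_def .
qed

lemma second_difference_approx:
  fixes f :: "'a::euclidean_space \<Rightarrow> real"
  assumes S: "open S" "p \<in> S" and df: "\<And>y. y \<in> S \<Longrightarrow> f differentiable (at y)"
    and du: "(\<lambda>y. pd f u y) differentiable (at p)" and e: "e > 0"
  shows "\<exists>d>0. \<forall>h. 0 < h \<and> h < d \<longrightarrow>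
     \<bar>(f (p + h *\<^sub>R u + h *\<^sub>R w) - f (p + h *\<^sub>R u) - f (p + h *\<^sub>R w) + f p)
        - h\<^sup>2 * pd (\<lambda>y. pd f u y) w p\<bar> \<le> e * h\<^sup>2 * (2 * norm u + norm w)"
proof -
  define g where "g = (\<lambda>y. pd f u y)"
  define G where "G = (\<lambda>v. pd g v p)"
  have gG: "(g has_derivative G) (at p)" unfolding G_def g_def using has_derivative_pd[OF du] by simp
  have linG: "linear G" using gG has_derivative_linear by blast
  obtain \<delta> where \<delta>: "\<delta> > 0" "\<And>x'. 0 < norm (x' - p) \<and> norm (x' - p) < \<delta> \<Longrightarrow>
      norm (g x' - g p - G (x' - p)) / norm (x' - p) < e"
    using gG[unfolded has_derivative_at'] e by blast
  have rem: "\<bar>g x' - g p - G (x' - p)\<bar> \<le> e * norm (x' - p)" if "norm (x' - p) < \<delta>" for x'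
    using \<delta>(2)[of x'] that linear_0[OF linG]
    by (cases "x' = p") (auto simp: field_simps)
  obtain r where r: "r > 0" "ball p r \<subseteq> S" using S openE by blast
  define c where "c = norm u + norm w + 1"
  have c: "c > 0" unfolding c_def by (simp add: add_nonneg_pos)
  show ?thesis
  proof (intro exI conjI allI impI)
    show "min \<delta> r / c > 0" using \<delta> r c by simp
    fix h :: real assume h: "0 < h \<and> h < min \<delta> r / c"
    have hb: "h * norm u + h * norm w < min \<delta> r"
    proof -
      have "h * norm u + h * norm w \<le> h * c" using h unfolding c_def by (simp add: distrib_left)
      also have "\<dots> < min \<delta> r" using h c by (simp add: pos_less_divide_eq mult.commute)
      finally show ?thesis .
    qed
    have "p + s *\<^sub>R u + t *\<^sub>R w \<in> S" if "0 \<le> s" "s \<le> h" "0 \<le> t" "t \<le> h" for s t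
    proof -
      have "norm (s *\<^sub>R u + t *\<^sub>R w) \<le> h * norm u + h * norm w"
        using that norm_triangle_ineq[of "s *\<^sub>R u" "t *\<^sub>R w"]
          mult_right_mono[of s h "norm u"] mult_right_mono[of t h "norm w"] by simp
      moreover have "dist p (p + s *\<^sub>R u + t *\<^sub>R w) = norm (s *\<^sub>R u + t *\<^sub>R w)"
        by (metis add.assoc add_diff_cancel_left' dist_commute dist_norm)
      ultimately show ?thesis using hb r(2) by auto
    qed
    then obtain \<theta> where \<theta>: "0 < \<theta>" "\<theta> < h" and
      mvt: "f (p + h *\<^sub>R u + h *\<^sub>R w) - f (p + h *\<^sub>R u) - f (p + h *\<^sub>R w) + f p
          = h * (g (p + \<theta> *\<^sub>R u + h *\<^sub>R w) - g (p + \<theta> *\<^sub>R u + 0 *\<^sub>R w))"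
      using second_difference_mvt[of S f h p u w] df h unfolding g_def by metis
    have "\<bar>g (p + \<theta> *\<^sub>R u + h *\<^sub>R w) - g (p + \<theta> *\<^sub>R u) - h * G w\<bar> \<le> e * h * (2 * norm u + norm w)"
      using linearization_difference_bound[OF linG, where \<delta>=\<delta>, OF _ _ _ _ rem] \<theta> hb e by simp
    then have "h * \<bar>g (p + \<theta> *\<^sub>R u + h *\<^sub>R w) - g (p + \<theta> *\<^sub>R u) - h * G w\<bar>
        \<le> e * h\<^sup>2 * (2 * norm u + norm w)"
      using h mult_left_mono[of _ _ h] by (fastforce simp: power2_eq_square mult_ac)
    moreover have "h * (g (p + \<theta> *\<^sub>R u + h *\<^sub>R w) - g (p + \<theta> *\<^sub>R u)) - h\<^sup>2 * G w
        = h * (g (p + \<theta> *\<^sub>R u + h *\<^sub>R w) - g (p + \<theta> *\<^sub>R u) - h * G w)"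
      by (simp add: power2_eq_square algebra_simps)
    ultimately show "\<bar>(f (p + h *\<^sub>R u + h *\<^sub>R w) - f (p + h *\<^sub>R u) - f (p + h *\<^sub>R w) + f p)
        - h\<^sup>2 * pd (\<lambda>y. pd f u y) w p\<bar> \<le> e * h\<^sup>2 * (2 * norm u + norm w)"
      using h unfolding mvt by (simp add: G_def g_def abs_mult)
  qed
qed

lemma pd_commute_real:
  fixes f :: "'a::euclidean_space \<Rightarrow> real"
  assumes S: "open S" "p \<in> S" and df: "\<And>y. y \<in> S \<Longrightarrow> f differentiable (at y)"
    and du: "(\<lambda>y. pd f u y) differentiable (at p)" and dw: "(\<lambda>y. pd f w y) differentiable (at p)"
  shows "pd (\<lambda>y. pd f u y) w p = pd (\<lambda>y. pd f w y) u p"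
proof (rule ccontr)
  define a where "a = pd (\<lambda>y. pd f u y) w p"
  define b where "b = pd (\<lambda>y. pd f w y) u p"
  assume "\<not> ?thesis"
  then have ab: "\<bar>a - b\<bar> > 0" unfolding a_def b_def by simp
  define C where "C = 3 * (norm u + norm w) + 1"
  have Cpos: "C > 0" unfolding C_def by (simp add: add_nonneg_pos)
  define e where "e = \<bar>a - b\<bar> / (2 * C)"
  have e: "e > 0" unfolding e_def using ab Cpos by simp
  obtain d1 where d1: "d1 > 0" "\<forall>h. 0 < h \<and> h < d1 \<longrightarrow>
     \<bar>(f (p + h *\<^sub>R u + h *\<^sub>R w) - f (p + h *\<^sub>R u) - f (p + h *\<^sub>R w) + f p)
        - h\<^sup>2 * a\<bar> \<le> e * h\<^sup>2 * (2 * norm u + norm w)"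
    using second_difference_approx[OF S df du e, of w] unfolding a_def by blast
  obtain d2 where d2: "d2 > 0" "\<forall>h. 0 < h \<and> h < d2 \<longrightarrow>
     \<bar>(f (p + h *\<^sub>R w + h *\<^sub>R u) - f (p + h *\<^sub>R w) - f (p + h *\<^sub>R u) + f p)
        - h\<^sup>2 * b\<bar> \<le> e * h\<^sup>2 * (2 * norm w + norm u)"
    using second_difference_approx[OF S df dw e, of u] unfolding b_def by blast
  define h where "h = min d1 d2 / 2"
  have h: "0 < h" "h < d1" "h < d2" unfolding h_def using d1 d2 by auto
  define \<Delta> where "\<Delta> = f (p + h *\<^sub>R u + h *\<^sub>R w) - f (p + h *\<^sub>R u) - f (p + h *\<^sub>R w) + f p"
  have A: "\<bar>\<Delta> - h\<^sup>2 * a\<bar> \<le> e * h\<^sup>2 * (2 * norm u + norm w)"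
    using d1(2) h unfolding \<Delta>_def by blast
  have B: "\<bar>\<Delta> - h\<^sup>2 * b\<bar> \<le> e * h\<^sup>2 * (2 * norm w + norm u)"
    using d2(2) h unfolding \<Delta>_def by (simp add: algebra_simps)
  have "h\<^sup>2 * \<bar>a - b\<bar> = \<bar>(\<Delta> - h\<^sup>2 * b) - (\<Delta> - h\<^sup>2 * a)\<bar>"
    by (simp add: abs_mult flip: right_diff_distrib)
  also have "\<dots> \<le> e * h\<^sup>2 * (2 * norm u + norm w) + e * h\<^sup>2 * (2 * norm w + norm u)"
    using A B by linarith
  also have "\<dots> = h\<^sup>2 * (e * (3 * (norm u + norm w)))" by (simp add: algebra_simps)
  also have "\<dots> < h\<^sup>2 * (e * C)"
    using h e unfolding C_def by (intro mult_strict_left_mono) auto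
  also have "\<dots> = h\<^sup>2 * (\<bar>a - b\<bar> / 2)" unfolding e_def using Cpos by simp
  finally show False using ab h by simp
qed

lemma pd_commute:
  fixes f :: "'a::euclidean_space \<Rightarrow> real^'n"
  assumes S: "open S" "p \<in> S" and df: "\<And>y. y \<in> S \<Longrightarrow> f differentiable (at y)"
    and du: "(\<lambda>y. pd f u y) differentiable (at p)" and dw: "(\<lambda>y. pd f w y) differentiable (at p)"
  shows "pd (\<lambda>y. pd f u y) w p = pd (\<lambda>y. pd f w y) u p"
proof -
  have "pd (\<lambda>y. pd f u y) w p $ c = pd (\<lambda>y. pd f w y) u p $ c" for c
  proof -
    define fc where "fc = (\<lambda>y. f y $ c)"
    have dfc: "\<And>y. y \<in> S \<Longrightarrow> fc differentiable (at y)"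
      unfolding fc_def using df differentiable_nth by blast
    have pd_fc: "\<And>v y. y \<in> S \<Longrightarrow> pd fc v y = pd f v y $ c"
      unfolding fc_def using df pd_nth by blast
    have d_pd_fc: "(\<lambda>y. pd fc v y) differentiable (at p)"
      if "(\<lambda>y. pd f v y) differentiable (at p)" for v
      using differentiable_cong_open[OF S, of "\<lambda>y. pd f v y $ c"] pd_fc differentiable_nth[OF that]
      by metis
    have pd_pd_fc: "pd (\<lambda>y. pd fc v y) z p = pd (\<lambda>y. pd f v y) z p $ c"
      if "(\<lambda>y. pd f v y) differentiable (at p)" for v z
      using pd_cong_open[OF S, of "\<lambda>y. pd fc v y" "\<lambda>y. pd f v y $ c"] pd_fc pd_nth[OF that] by simp
    show ?thesis
      using pd_commute_real[OF S dfc d_pd_fc[OF du] d_pd_fc[OF dw]] pd_pd_fc du dw by simp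
  qed
  then show ?thesis by (simp add: vec_eq_iff)
qed

section \<open>Functions of class \<open>C\<^sup>k\<close>\<close>

lemma Ck_Suc_imp_Ck: "Ck (Suc k) U f \<Longrightarrow> Ck k U f"
proof (induction k arbitrary: f)
  case 0 then show ?case by simp
next
  case (Suc k)
  have "f differentiable_on U" "continuous_on U f" "\<forall>e\<in>Basis. Ck (Suc k) U (\<lambda>x. pd f e x)"
    using Suc.prems unfolding Ck.simps(2)[of "Suc k"] by blast+
  then show ?case using Suc.IH unfolding Ck.simps(2)[of k] by blast
qed

lemma Ck_diff_at: "Ck (Suc k) U f \<Longrightarrow> open U \<Longrightarrow> x \<in> U \<Longrightarrow> f differentiable (at x)"
  using differentiable_on_eq_differentiable_at unfolding Ck.simps(2)[of k] by blast

lemma Ck_pd: "Ck (Suc k) U f \<Longrightarrow> e \<in> Basis \<Longrightarrow> Ck k U (\<lambda>x. pd f e x)"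
  unfolding Ck.simps(2)[of k] by blast

lemma Ck_SucD: "Ck (Suc k) U f \<Longrightarrow> f differentiable_on U \<and> continuous_on U f \<and> (\<forall>e\<in>Basis. Ck k U (\<lambda>x. pd f e x))"
  unfolding Ck.simps(2)[of k] by blast

lemma Ck_SucI:
  assumes "open U" "\<And>x. x \<in> U \<Longrightarrow> f differentiable (at x)"
    "\<And>e. e \<in> Basis \<Longrightarrow> Ck k U (\<lambda>x. pd f e x)"
  shows "Ck (Suc k) U f"
proof -
  have "f differentiable_on U" using assms differentiable_at_imp_differentiable_on by blast
  then show ?thesis using assms differentiable_imp_continuous_on by auto
qed

lemma Ck_cong: "Ck k U f \<Longrightarrow> open U \<Longrightarrow> (\<And>x. x \<in> U \<Longrightarrow> f x = g x) \<Longrightarrow> Ck k U g"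
proof (induction k arbitrary: f g)
  case 0 then show ?case using continuous_on_cong[of U U f g] by simp
next
  case (Suc k)
  have fd: "f differentiable_on U" and fc: "continuous_on U f" using Ck_SucD[OF Suc.prems(1)] by simp_all
  have d: "g differentiable_on U"
  proof -
    have "g differentiable (at x)" if "x \<in> U" for x
    proof -
      have "f differentiable (at x)"
        using fd Suc.prems(2) that differentiable_on_eq_differentiable_at by blast
      then show ?thesis using differentiable_cong_open[OF Suc.prems(2) that, of f g] Suc.prems(3) by blast
    qed
    then show ?thesis using differentiable_at_imp_differentiable_on by blast
  qed
  have c: "continuous_on U g" using fc Suc.prems(3) continuous_on_cong by blast
  have "Ck k U (\<lambda>x. pd g e x)" if "e \<in> Basis" for e
  proof -
    have "Ck k U (\<lambda>x. pd f e x)" using Ck_SucD[OF Suc.prems(1)] that by blast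
    moreover have "\<And>x. x \<in> U \<Longrightarrow> pd f e x = pd g e x"
      using pd_cong_open[OF Suc.prems(2), of _ f g] Suc.prems(3) by blast
    ultimately show ?thesis using Suc.IH[OF _ Suc.prems(2)] by blast
  qed
  then show ?case using d c unfolding Ck.simps(2)[of k] by blast
qed

lemma Ck_const: "open U \<Longrightarrow> Ck k U (\<lambda>x. c)"
proof (induction k arbitrary: c)
  case 0 then show ?case by simp
next
  case (Suc k)
  show ?case
  proof (rule Ck_SucI[OF Suc.prems])
    fix e :: 'a
    have "(\<lambda>x. pd (\<lambda>x. c) e x) = (\<lambda>x. 0)" by simp
    then show "Ck k U (\<lambda>x. pd (\<lambda>x. c) e x)" using Suc.IH[OF Suc.prems] by simp
  qed simp
qed

lemma Ck_linear:
  fixes U :: "'a::euclidean_space set"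
  assumes L: "bounded_linear L" and U: "open U"
  shows "Ck k U f \<Longrightarrow> Ck k U (\<lambda>x. L (f x))"
proof (induction k arbitrary: f)
  case 0
  then have "continuous_on U f" by (simp only: Ck.simps(1))
  then have "continuous_on U (\<lambda>x. L (f x))" by (rule bounded_linear.continuous_on[OF L])
  then show ?case by (simp only: Ck.simps(1))
next
  case (Suc k)
  have dx: "f differentiable (at x)" if "x \<in> U" for x using Ck_diff_at[OF Suc.prems U that] .
  show ?case
  proof (rule Ck_SucI[OF U])
    fix x assume "x \<in> U"
    then show "(\<lambda>x. L (f x)) differentiable (at x)"
      using bounded_linear.has_derivative[OF L has_derivative_pd[OF dx]] unfolding differentiable_def by blast
  next
    fix e :: 'a assume e: "e \<in> Basis"
    have eq: "pd (\<lambda>x. L (f x)) e x = L (pd f e x)" if "x \<in> U" for x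
      by (rule pd_eq, rule bounded_linear.has_derivative[OF L has_derivative_pd[OF dx[OF that]]])
    have "Ck k U (\<lambda>x. pd f e x)" using Ck_SucD[OF Suc.prems] e by blast
    then have "Ck k U (\<lambda>x. L (pd f e x))" by (rule Suc.IH)
    then show "Ck k U (\<lambda>x. pd (\<lambda>x. L (f x)) e x)" using Ck_cong[OF _ U, of k "\<lambda>x. L (pd f e x)"] eq by simp
  qed
qed

lemma Ck_add:
  fixes U :: "'a::euclidean_space set"
  assumes U: "open U"
  shows "Ck k U f \<Longrightarrow> Ck k U g \<Longrightarrow> Ck k U (\<lambda>x. f x + g x)"
proof (induction k arbitrary: f g)
  case 0
  then have "continuous_on U f" "continuous_on U g" by (simp_all only: Ck.simps(1))
  then have "continuous_on U (\<lambda>x. f x + g x)" by (rule continuous_on_add)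
  then show ?case by (simp only: Ck.simps(1))
next
  case (Suc k)
  have df: "f differentiable (at x)" if "x \<in> U" for x using Ck_diff_at[OF Suc.prems(1) U that] .
  have dg: "g differentiable (at x)" if "x \<in> U" for x using Ck_diff_at[OF Suc.prems(2) U that] .
  show ?case
  proof (rule Ck_SucI[OF U])
    fix x assume "x \<in> U"
    then show "(\<lambda>x. f x + g x) differentiable (at x)" using differentiable_add[OF df dg] by blast
  next
    fix e :: 'a assume e: "e \<in> Basis"
    have eq: "pd (\<lambda>x. f x + g x) e x = pd f e x + pd g e x" if "x \<in> U" for x
      using pd_add df dg that by blast
    have "Ck k U (\<lambda>x. pd f e x)" "Ck k U (\<lambda>x. pd g e x)" using Ck_SucD[OF Suc.prems(1)] Ck_SucD[OF Suc.prems(2)] e by blast+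
    then have "Ck k U (\<lambda>x. pd f e x + pd g e x)" by (rule Suc.IH)
    then show "Ck k U (\<lambda>x. pd (\<lambda>x. f x + g x) e x)" using Ck_cong[OF _ U, of k "\<lambda>x. pd f e x + pd g e x"] eq by simp
  qed
qed

lemma Ck_bilinear:
  fixes U :: "'a::euclidean_space set"
  assumes B: "bounded_bilinear B" and U: "open U"
  shows "Ck k U f \<Longrightarrow> Ck k U g \<Longrightarrow> Ck k U (\<lambda>x. B (f x) (g x))"
proof (induction k arbitrary: f g)
  case 0
  then have "continuous_on U f" "continuous_on U g" by (simp_all only: Ck.simps(1))
  then have "continuous_on U (\<lambda>x. B (f x) (g x))" by (rule bounded_bilinear.continuous_on[OF B])
  then show ?case by (simp only: Ck.simps(1))
next
  case (Suc k)
  have df: "f differentiable (at x)" if "x \<in> U" for x using Ck_diff_at[OF Suc.prems(1) U that] .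
  have dg: "g differentiable (at x)" if "x \<in> U" for x using Ck_diff_at[OF Suc.prems(2) U that] .
  show ?case
  proof (rule Ck_SucI[OF U])
    fix x assume "x \<in> U"
    then show "(\<lambda>x. B (f x) (g x)) differentiable (at x)"
      using bounded_bilinear.FDERIV[OF B has_derivative_pd[OF df] has_derivative_pd[OF dg]] unfolding differentiable_def by blast
  next
    fix e :: 'a assume e: "e \<in> Basis"
    have eq: "pd (\<lambda>x. B (f x) (g x)) e x = B (f x) (pd g e x) + B (pd f e x) (g x)" if "x \<in> U" for x
      by (rule pd_eq, rule bounded_bilinear.FDERIV[OF B has_derivative_pd[OF df[OF that]] has_derivative_pd[OF dg[OF that]]])
    have a: "Ck k U (\<lambda>x. pd f e x)" "Ck k U (\<lambda>x. pd g e x)" using Ck_SucD[OF Suc.prems(1)] Ck_SucD[OF Suc.prems(2)] e by blast+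
    have b: "Ck k U f" "Ck k U g" using Ck_Suc_imp_Ck[OF Suc.prems(1)] Ck_Suc_imp_Ck[OF Suc.prems(2)] .
    have "Ck k U (\<lambda>x. B (f x) (pd g e x))" using Suc.IH[OF b(1) a(2)] .
    moreover have "Ck k U (\<lambda>x. B (pd f e x) (g x))" using Suc.IH[OF a(1) b(2)] .
    ultimately have "Ck k U (\<lambda>x. B (f x) (pd g e x) + B (pd f e x) (g x))"
      using Ck_add[OF U] by blast
    then show "Ck k U (\<lambda>x. pd (\<lambda>x. B (f x) (g x)) e x)"
      using Ck_cong[OF _ U, of k "\<lambda>x. B (f x) (pd g e x) + B (pd f e x) (g x)"] eq by simp
  qed
qed

lemma Ck_mult: fixes U :: "'a::euclidean_space set" shows
  "open U \<Longrightarrow> Ck k U f \<Longrightarrow> Ck k U g \<Longrightarrow> Ck k U (\<lambda>x. f x * g x :: real)"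
  using Ck_bilinear[OF bounded_bilinear_mult] by blast

lemma Ck_scaleR: fixes U :: "'a::euclidean_space set" shows
  "open U \<Longrightarrow> Ck k U f \<Longrightarrow> Ck k U g \<Longrightarrow> Ck k U (\<lambda>x. f x *\<^sub>R g x)"
  using Ck_bilinear[OF bounded_bilinear_scaleR] by blast

lemma Ck_inner: fixes U :: "'a::euclidean_space set" shows
  "open U \<Longrightarrow> Ck k U f \<Longrightarrow> Ck k U g \<Longrightarrow> Ck k U (\<lambda>x. f x \<bullet> g x)"
  using Ck_bilinear[OF bounded_bilinear_inner] by blast

lemma Ck_cross: fixes U :: "'a::euclidean_space set" shows
  "open U \<Longrightarrow> Ck k U f \<Longrightarrow> Ck k U g \<Longrightarrow> Ck k U (\<lambda>x. f x \<times> g x)"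
  using Ck_bilinear[OF bounded_bilinear_cross] by blast

lemma Ck_minus: fixes U :: "'a::euclidean_space set" shows
  "open U \<Longrightarrow> Ck k U f \<Longrightarrow> Ck k U (\<lambda>x. - f x)"
  using Ck_linear[OF bounded_linear_minus[OF bounded_linear_ident]] by blast

lemma Ck_sum: fixes U :: "'a::euclidean_space set" assumes U: "open U" shows
  "finite S \<Longrightarrow> (\<And>i. i \<in> S \<Longrightarrow> Ck k U (f i)) \<Longrightarrow> Ck k U (\<lambda>x. \<Sum>i\<in>S. f i x)"
proof (induction S rule: finite_induct)
  case empty then show ?case using Ck_const[OF U] by simp
next
  case (insert a S)
  have A: "Ck k U (\<lambda>x. f a x)" using insert.prems by simp
  have B: "Ck k U (\<lambda>x. \<Sum>i\<in>S. f i x)" using insert.IH insert.prems by simp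
  have "Ck k U (\<lambda>x. f a x + (\<Sum>i\<in>S. f i x))"
    using Ck_add[OF U A B] .
  then show ?case using insert.hyps by simp
qed

lemma Ck_vec: fixes U :: "'a::euclidean_space set" and F :: "'n::finite \<Rightarrow> 'a \<Rightarrow> real" shows
  "open U \<Longrightarrow> (\<And>i. Ck k U (\<lambda>x. F i x)) \<Longrightarrow> Ck k U (\<lambda>x. \<chi> i. F i x)"
proof -
  assume U: "open U" and F: "\<And>i. Ck k U (\<lambda>x. F i x)"
  have "Ck k U (\<lambda>x. F i x *\<^sub>R (axis i 1 :: real^'n))" for i
    using Ck_scaleR[OF U F Ck_const[OF U]] .
  then have "Ck k U (\<lambda>x. \<Sum>i\<in>UNIV. F i x *\<^sub>R (axis i 1 :: real^'n))"
    using Ck_sum[OF U, where S=UNIV and f="\<lambda>i x. F i x *\<^sub>R (axis i 1 :: real^'n)"] by simp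
  moreover have "(\<Sum>i\<in>UNIV. F i x *\<^sub>R (axis i 1 :: real^'n)) = (\<chi> i. F i x)" for x
    using basis_expansion[of "\<chi> i. F i x"] by (simp add: scalar_mult_eq_scaleR)
  ultimately show ?thesis by simp
qed

lemma Ck_id: fixes V :: "'a::euclidean_space set" shows "open V \<Longrightarrow> Ck k V (\<lambda>x. x)"
proof (induction k)
  case 0 then show ?case by (simp add: continuous_on_id)
next
  case (Suc k)
  show ?case
  proof (rule Ck_SucI[OF Suc.prems])
    fix e :: 'a
    have "(\<lambda>x. pd (\<lambda>x. x) e x) = (\<lambda>x. e)" by (simp add: pd_ident)
    then show "Ck k V (\<lambda>x. pd (\<lambda>x. x) e x)" using Ck_const[OF Suc.prems] by simp
  qed simp
qed

lemma Ck_comp: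
  fixes U :: "'a::euclidean_space set" and V :: "'b::euclidean_space set"
    and F :: "'b \<Rightarrow> 'c::real_normed_vector"
  assumes U: "open U" and V: "open V"
  shows "Ck k V F \<Longrightarrow> Ck k U g \<Longrightarrow> g ` U \<subseteq> V \<Longrightarrow> Ck k U (\<lambda>x. F (g x))"
proof (induction k arbitrary: F g)
  case 0
  then have "continuous_on V F" "continuous_on U g" by (simp_all only: Ck.simps(1))
  then have "continuous_on U (\<lambda>x. F (g x))" using continuous_on_compose2[of V F U g] 0(3) by simp
  then show ?case by (simp only: Ck.simps(1))
next
  case (Suc k)
  have dg: "g differentiable (at x)" if "x \<in> U" for x using Ck_diff_at[OF Suc.prems(2) U that] .
  have dF: "F differentiable (at (g x))" if "x \<in> U" for x
  proof -
    have "g x \<in> V" using Suc.prems(3) that by blast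
    then show ?thesis using Ck_diff_at[OF Suc.prems(1) V] by simp
  qed
  show ?case
  proof (rule Ck_SucI[OF U])
    fix x assume "x \<in> U"
    then show "(\<lambda>x. F (g x)) differentiable (at x)"
      using has_derivative_compose[OF has_derivative_pd[OF dg] has_derivative_pd[OF dF]] unfolding differentiable_def by blast
  next
    fix e :: 'a assume e: "e \<in> Basis"
    have eq: "pd (\<lambda>x. F (g x)) e x = (\<Sum>b\<in>Basis. (pd g e x \<bullet> b) *\<^sub>R pd F b (g x))" if "x \<in> U" for x
      using pd_chain[OF dg[OF that] dF[OF that]] pd_expand[OF dF[OF that], of "pd g e x"] by (simp only:)
    have "Ck k U (\<lambda>x. (pd g e x \<bullet> b) *\<^sub>R pd F b (g x))" if b: "b \<in> Basis" for b
    proof -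
      have "Ck k U (\<lambda>x. pd g e x)" using Ck_SucD[OF Suc.prems(2)] e by blast
      then have A: "Ck k U (\<lambda>x. pd g e x \<bullet> b)" using Ck_inner[OF U _ Ck_const[OF U]] by blast
      have "Ck k V (\<lambda>y. pd F b y)" using Ck_SucD[OF Suc.prems(1)] b by blast
      then have B: "Ck k U (\<lambda>x. pd F b (g x))" using Suc.IH[OF _ Ck_Suc_imp_Ck[OF Suc.prems(2)] Suc.prems(3)] by simp
      show ?thesis using Ck_scaleR[OF U A B] .
    qed
    then have "Ck k U (\<lambda>x. \<Sum>b\<in>Basis. (pd g e x \<bullet> b) *\<^sub>R pd F b (g x))"
      using Ck_sum[OF U, where S=Basis and f="\<lambda>b x. (pd g e x \<bullet> b) *\<^sub>R pd F b (g x)"] by simp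
    then show "Ck k U (\<lambda>x. pd (\<lambda>x. F (g x)) e x)"
      using Ck_cong[OF _ U, of k "\<lambda>x. \<Sum>b\<in>Basis. (pd g e x \<bullet> b) *\<^sub>R pd F b (g x)"] eq by simp
  qed
qed

lemma Ck_inverse:
  fixes U :: "'a::euclidean_space set" and f :: "'a \<Rightarrow> real"
  assumes U: "open U" and nz: "\<And>x. x \<in> U \<Longrightarrow> f x \<noteq> 0"
  shows "Ck k U f \<Longrightarrow> Ck k U (\<lambda>x. inverse (f x))"
proof (induction k)
  case 0
  then have "continuous_on U f" by (simp only: Ck.simps(1))
  then have "continuous_on U (\<lambda>x. inverse (f x))" using nz by (intro continuous_on_inverse) auto
  then show ?case by (simp only: Ck.simps(1))
next
  case (Suc k)
  have df: "f differentiable (at x)" if "x \<in> U" for x using Ck_diff_at[OF Suc.prems U that] .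
  have hd: "((\<lambda>x. inverse (f x)) has_derivative (\<lambda>h. - (inverse (f x) * pd f h x * inverse (f x)))) (at x)"
    if "x \<in> U" for x
    using Deriv.has_derivative_inverse[OF nz[OF that] has_derivative_pd[OF df[OF that]]] .
  show ?case
  proof (rule Ck_SucI[OF U])
    fix x assume "x \<in> U"
    then show "(\<lambda>x. inverse (f x)) differentiable (at x)" using hd unfolding differentiable_def by blast
  next
    fix e :: 'a assume e: "e \<in> Basis"
    have eq: "pd (\<lambda>x. inverse (f x)) e x = - (inverse (f x) * pd f e x * inverse (f x))" if "x \<in> U" for x
      using pd_eq[OF hd[OF that]] .
    have I: "Ck k U (\<lambda>x. inverse (f x))" using Suc.IH[OF Ck_Suc_imp_Ck[OF Suc.prems]] .
    have P: "Ck k U (\<lambda>x. pd f e x)" using Ck_SucD[OF Suc.prems] e by blast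
    have "Ck k U (\<lambda>x. - (inverse (f x) * pd f e x * inverse (f x)))"
      using Ck_minus[OF U Ck_mult[OF U Ck_mult[OF U I P] I]] .
    then show "Ck k U (\<lambda>x. pd (\<lambda>x. inverse (f x)) e x)"
      using Ck_cong[OF _ U, of k "\<lambda>x. - (inverse (f x) * pd f e x * inverse (f x))"] eq by simp
  qed
qed

lemma Ck_norm:
  fixes U :: "'a::euclidean_space set" and f :: "'a \<Rightarrow> 'b::euclidean_space"
  assumes U: "open U" and nz: "\<And>x. x \<in> U \<Longrightarrow> f x \<noteq> 0"
  shows "Ck k U f \<Longrightarrow> Ck k U (\<lambda>x. norm (f x))"
proof (induction k)
  case 0
  then have "continuous_on U f" by (simp only: Ck.simps(1))
  then have "continuous_on U (\<lambda>x. norm (f x))" by (intro continuous_on_norm)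
  then show ?case by (simp only: Ck.simps(1))
next
  case (Suc k)
  have df: "f differentiable (at x)" if "x \<in> U" for x using Ck_diff_at[OF Suc.prems U that] .
  have dn: "norm differentiable (at (f x))" if "x \<in> U" for x using differentiable_norm_at[OF nz[OF that]] .
  show ?case
  proof (rule Ck_SucI[OF U])
    fix x assume "x \<in> U"
    then show "(\<lambda>x. norm (f x)) differentiable (at x)"
      using has_derivative_compose[OF has_derivative_pd[OF df] has_derivative_pd[OF dn]] unfolding differentiable_def by blast
  next
    fix e :: 'a assume e: "e \<in> Basis"
    have eq: "pd (\<lambda>x. norm (f x)) e x = (pd f e x \<bullet> f x) * inverse (norm (f x))" if "x \<in> U" for x
      using pd_chain[OF df[OF that] dn[OF that]] pd_norm[OF nz[OF that]] by (simp add: divide_inverse)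
    have N: "Ck k U (\<lambda>x. norm (f x))" using Suc.IH[OF Ck_Suc_imp_Ck[OF Suc.prems]] .
    have I: "Ck k U (\<lambda>x. inverse (norm (f x)))" using Ck_inverse[OF U _ N] nz by simp
    have P: "Ck k U (\<lambda>x. pd f e x)" using Ck_SucD[OF Suc.prems] e by blast
    have "Ck k U (\<lambda>x. (pd f e x \<bullet> f x) * inverse (norm (f x)))"
      using Ck_mult[OF U Ck_inner[OF U P Ck_Suc_imp_Ck[OF Suc.prems]] I] .
    then show "Ck k U (\<lambda>x. pd (\<lambda>x. norm (f x)) e x)"
      using Ck_cong[OF _ U, of k "\<lambda>x. (pd f e x \<bullet> f x) * inverse (norm (f x))"] eq by simp
  qed
qed

section \<open>Linear algebra in \<open>\<real>\<^sup>3\<close>\<close>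

lemma cross_cross_left: "((a::real^3) \<times> b) \<times> c = (a \<bullet> c) *\<^sub>R b - (b \<bullet> c) *\<^sub>R a"
  by (simp add: cross3_simps forall_3)

lemma inner_cross_assoc: "((a::real^3) \<times> b) \<bullet> c = a \<bullet> (b \<times> c)"
  by (simp add: cross3_simps)

lemma inner_cross_cross: "((a::real^3) \<times> b) \<bullet> (a \<times> b) = (a \<bullet> a) * (b \<bullet> b) - (a \<bullet> b) * (a \<bullet> b)"
  by (simp add: cross3_simps)

lemma cross_frame_expansion:
  fixes a b v :: "real^3"
  shows "((a \<bullet> a) * (b \<bullet> b) - (a \<bullet> b) * (a \<bullet> b)) *\<^sub>R v =
    (v \<bullet> ((b \<bullet> b) *\<^sub>R a - (a \<bullet> b) *\<^sub>R b)) *\<^sub>R a + (v \<bullet> ((a \<bullet> a) *\<^sub>R b - (a \<bullet> b) *\<^sub>R a)) *\<^sub>R b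
     + (v \<bullet> (a \<times> b)) *\<^sub>R (a \<times> b)"
  unfolding vec_eq_iff
proof
  fix i :: 3
  show "(((a \<bullet> a) * (b \<bullet> b) - (a \<bullet> b) * (a \<bullet> b)) *\<^sub>R v) $ i =
    ((v \<bullet> ((b \<bullet> b) *\<^sub>R a - (a \<bullet> b) *\<^sub>R b)) *\<^sub>R a + (v \<bullet> ((a \<bullet> a) *\<^sub>R b - (a \<bullet> b) *\<^sub>R a)) *\<^sub>R b
     + (v \<bullet> (a \<times> b)) *\<^sub>R (a \<times> b)) $ i"
    using exhaust_3[of i]
    by (auto simp: inner_vec_def sum_3 cross3_def vector_def) (simp_all add: algebra_simps)
qed

lemma cross_frame_tangent:
  fixes a b x :: "real^3"
  defines "D \<equiv> (a \<bullet> a) * (b \<bullet> b) - (a \<bullet> b) * (a \<bullet> b)"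
  defines "R1 \<equiv> (b \<bullet> b) *\<^sub>R a - (a \<bullet> b) *\<^sub>R b"
  defines "R2 \<equiv> (a \<bullet> a) *\<^sub>R b - (a \<bullet> b) *\<^sub>R a"
  assumes t: "x \<bullet> (a \<times> b) = 0" and D: "D \<noteq> 0"
  shows "x = ((x \<bullet> R1) / D) *\<^sub>R a + ((x \<bullet> R2) / D) *\<^sub>R b"
proof -
  have "D *\<^sub>R x = (x \<bullet> R1) *\<^sub>R a + (x \<bullet> R2) *\<^sub>R b"
    using cross_frame_expansion[of a b x] t unfolding D_def R1_def R2_def by simp
  then have "(1/D) *\<^sub>R (D *\<^sub>R x) = (1/D) *\<^sub>R ((x \<bullet> R1) *\<^sub>R a + (x \<bullet> R2) *\<^sub>R b)" by simp
  then show ?thesis using D by (simp add: scaleR_add_right)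
qed

lemma cross_trace_frame:
  fixes a b :: "real^3"
  shows "(\<alpha> *\<^sub>R a + \<beta> *\<^sub>R b) \<times> b + a \<times> (\<gamma> *\<^sub>R a + \<delta> *\<^sub>R b) = (\<alpha> + \<delta>) *\<^sub>R (a \<times> b)"
  by (simp add: cross_add_left cross_add_right cross_mult_left cross_mult_right scaleR_add_left)

lemma cross_det_frame:
  fixes a b :: "real^3"
  shows "(\<alpha> *\<^sub>R a + \<beta> *\<^sub>R b) \<times> (\<gamma> *\<^sub>R a + \<delta> *\<^sub>R b) = (\<alpha> * \<delta> - \<beta> * \<gamma>) *\<^sub>R (a \<times> b)"
proof -
  have "b \<times> a = - (a \<times> b)" using cross_skew by blast
  then show ?thesis
    by (simp add: cross_add_left cross_add_right cross_mult_left cross_mult_right scaleR_diff_left mult.commute)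
qed

lemma matrix_inv_unique:
  fixes A :: "real^'n^'n"
  assumes "A ** B = mat 1" "B ** A = mat 1"
  shows "matrix_inv A = B"
proof -
  have "A ** matrix_inv A = mat 1 \<and> matrix_inv A ** A = mat 1"
    unfolding matrix_inv_def by (rule someI_ex) (use assms in blast)
  then show ?thesis using assms by (metis matrix_mul_assoc matrix_mul_lid matrix_mul_rid)
qed

lemma matrix_inv_2:
  fixes A :: "real^2^2"
  assumes "det A \<noteq> 0"
  shows "matrix_inv A = (\<chi> i j. if i = 1 \<and> j = 1 then A$2$2 / det A else if i = 2 \<and> j = 2 then A$1$1 / det A
                                 else if i = 1 then - A$1$2 / det A else - A$2$1 / det A)"
proof -
  have "det A * det A \<noteq> 0" using assms by simp
  then show ?thesis using assms unfolding det_2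
    by (intro matrix_inv_unique)
      (simp_all add: vec_eq_iff forall_2 matrix_matrix_mult_def sum_2 mat_def field_simps)
qed

definition normal_extension :: "real^3 \<Rightarrow> real^3^3 \<Rightarrow> real \<Rightarrow> real^3^3" where
  "normal_extension n H c = projn n ** H ** projn n + c *\<^sub>R projn n + (\<chi> i j. n$i * n$j)"

lemma outer_mult_vec: "(\<chi> i j. n$i * n$j) *v w = (n \<bullet> (w::real^3)) *\<^sub>R n"
  by (simp add: vec_eq_iff matrix_vector_mult_def inner_vec_def sum_distrib_left mult_ac)

lemma projn_mult_vec: "projn n *v w = w - (n \<bullet> w) *\<^sub>R n"
  unfolding projn_def by (simp add: matrix_vector_mult_diff_rdistrib outer_mult_vec)

lemma normal_extension_mult_vec:
  "normal_extension n H c *v w = projn n *v (H *v (projn n *v w)) + c *\<^sub>R (projn n *v w) + (n \<bullet> w) *\<^sub>R n"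
  unfolding normal_extension_def
  by (simp add: matrix_vector_mult_add_rdistrib matrix_vector_mul_assoc scaleR_matrix_vector_assoc
      outer_mult_vec matrix_mul_assoc)

lemma normal_extension_normal: "n \<bullet> n = 1 \<Longrightarrow> normal_extension n H c *v n = n"
  unfolding normal_extension_mult_vec projn_mult_vec by simp

lemma inner_normal_extension_tangent:
  "n \<bullet> n = 1 \<Longrightarrow> u \<bullet> n = 0 \<Longrightarrow> w \<bullet> n = 0 \<Longrightarrow> u \<bullet> (normal_extension n H c *v w) = u \<bullet> (H *v w) + c * (u \<bullet> w)"
  unfolding normal_extension_mult_vec projn_mult_vec
  by (simp add: inner_diff_right inner_add_right inner_commute)

lemma normal_extension_tangent:
  "n \<bullet> n = 1 \<Longrightarrow> w \<bullet> n = 0 \<Longrightarrow> n \<bullet> (normal_extension n H c *v w) = 0"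
  unfolding normal_extension_mult_vec projn_mult_vec
  by (simp add: inner_diff_right inner_add_right inner_commute)

lemma det_tangent_block:
  fixes a :: "2 \<Rightarrow> real^3" and n :: "real^3" and M :: "real^3^3"
  assumes a: "\<And>i. a i \<bullet> n = 0" and n: "n \<bullet> n = 1"
    and Mn: "M *v n = n" and nMa: "\<And>i. n \<bullet> (M *v a i) = 0"
  shows "det (\<chi> i j. a i \<bullet> (M *v a j)) = det (\<chi> i j. a i \<bullet> a j) * det M"
proof -
  define Q :: "real^3^3" where "Q = vector [a 1, a 2, n]"
  have Q: "Q$1 = a 1" "Q$2 = a 2" "Q$3 = n" unfolding Q_def by (simp_all add: vector_def)
  have QMQ: "(Q ** M ** transpose Q) $ i $ j = Q$i \<bullet> (M *v Q$j)" for M i j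
    by (simp add: matrix_matrix_mult_def transpose_def matrix_vector_mult_def inner_vec_def sum_3
        algebra_simps)
  \<comment> \<open>in the frame \<open>a\<^sub>1, a\<^sub>2, n\<close> both Gram-type matrices are block diagonal with a trailing \<open>1\<close>\<close>
  have "det (Q ** M ** transpose Q) = det (\<chi> i j. a i \<bullet> (M *v a j))"
    unfolding det_3 det_2 QMQ Q Mn using a n nMa by (simp add: inner_commute)
  moreover have "det (Q ** mat 1 ** transpose Q) = det (\<chi> i j. a i \<bullet> a j)"
    unfolding det_3 det_2 QMQ Q using a n by (simp add: inner_commute)
  ultimately show ?thesis by (simp add: det_mul algebra_simps)
qed

section \<open>Regular surface patches\<close>

definition tangent_coord :: "(real^2 \<Rightarrow> real^3) \<Rightarrow> real^2 \<Rightarrow> real^3 \<Rightarrow> 2 \<Rightarrow> real" where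
  "tangent_coord X p w i = (\<Sum>j\<in>UNIV. ginv X p $ i $ j * (w \<bullet> Xd X j p))"

lemma sdiv_tangent_coord: "sdiv X V p = (\<Sum>i\<in>UNIV. tangent_coord X p (pd V (axis i 1) p) i)"
  by (simp add: sdiv_def tangent_coord_def)

lemma dxi_apply_tangent_coord:
  "dxi_apply gam X p w = (\<Sum>i\<in>UNIV. tangent_coord X p w i *\<^sub>R pd (xi gam X) (axis i 1) p)"
  by (simp add: dxi_apply_def tangent_coord_def)

lemma open_nonzero: "open (- {0::'a::real_normed_vector})"
  by (simp add: open_Compl)

locale regular_patch =
  fixes X :: "real^2 \<Rightarrow> real^3" and U :: "(real^2) set"
  assumes U_open: "open U" and X_smooth: "smooth_on U X"
    and immersion: "\<forall>p\<in>U. Xd X 1 p \<times> Xd X 2 p \<noteq> 0"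
begin

lemma Ck_X: "Ck k U X"
  using X_smooth unfolding smooth_on_def by blast

lemma Xd_eq: "Xd X i = (\<lambda>p. pd X (axis i 1) p)"
  by (rule ext) (simp add: Xd_def)

lemma Ck_Xd: "Ck k U (Xd X i)"
  using Ck_pd[OF Ck_X[of "Suc k"], of "axis i 1"] Xd_eq by simp

definition nvec :: "real^2 \<Rightarrow> real^3" where "nvec p = Xd X 1 p \<times> Xd X 2 p"

lemma Ck_nvec: "Ck k U nvec"
  using Ck_cross[OF U_open Ck_Xd Ck_Xd] unfolding nvec_def[abs_def] .

lemma nvec_nonzero: "p \<in> U \<Longrightarrow> nvec p \<noteq> 0"
  using immersion unfolding nvec_def by blast

lemma nu_eq: "nu X = (\<lambda>p. inverse (norm (nvec p)) *\<^sub>R nvec p)"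
  by (rule ext) (simp add: nu_def nvec_def divide_inverse)

lemma inner_nu: "w \<bullet> nu X p = (w \<bullet> nvec p) / norm (nvec p)"
  by (simp add: nu_eq divide_inverse mult.commute)

lemma Ck_nu: "Ck k U (nu X)"
proof -
  have "Ck k U (\<lambda>p. norm (nvec p))" using Ck_norm[OF U_open nvec_nonzero Ck_nvec] .
  then have "Ck k U (\<lambda>p. inverse (norm (nvec p)))" using Ck_inverse[OF U_open] nvec_nonzero by simp
  then show ?thesis using Ck_scaleR[OF U_open _ Ck_nvec] nu_eq by simp
qed

lemma norm_nu: "p \<in> U \<Longrightarrow> norm (nu X p) = 1"
  using nvec_nonzero[of p] by (simp add: nu_eq)

lemma nu_nonzero: "p \<in> U \<Longrightarrow> nu X p \<noteq> 0"
  using norm_nu by fastforce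

lemma differentiable_X: "p \<in> U \<Longrightarrow> X differentiable (at p)"
  using Ck_diff_at[OF Ck_X[of "Suc 0"] U_open] .

lemma differentiable_Xd: "p \<in> U \<Longrightarrow> Xd X i differentiable (at p)"
  using Ck_diff_at[OF Ck_Xd[of "Suc 0"] U_open] .

lemma differentiable_nvec: "p \<in> U \<Longrightarrow> nvec differentiable (at p)"
  using Ck_diff_at[OF Ck_nvec[of "Suc 0"] U_open] .

lemma differentiable_nu: "p \<in> U \<Longrightarrow> nu X differentiable (at p)"
  using Ck_diff_at[OF Ck_nu[of "Suc 0"] U_open] .

lemma pd_X: "pd X (axis i 1) p = Xd X i p"
  by (simp add: Xd_def)

lemma pd_Xd_commute: "p \<in> U \<Longrightarrow> pd (Xd X 1) (axis 2 1) p = pd (Xd X 2) (axis 1 1) p"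
  using pd_commute[OF U_open _ differentiable_X, of p "axis 1 1" "axis 2 1"]
    differentiable_Xd[of p 1] differentiable_Xd[of p 2]
  unfolding Xd_eq by blast

lemma sdiv_cong: "p \<in> U \<Longrightarrow> (\<And>q. q \<in> U \<Longrightarrow> V q = V' q) \<Longrightarrow> sdiv X V p = sdiv X V' p"
  unfolding sdiv_def using pd_cong_open[OF U_open, of p V V'] by simp

definition g :: "2 \<Rightarrow> 2 \<Rightarrow> real^2 \<Rightarrow> real" where "g i j p = Xd X i p \<bullet> Xd X j p"
definition gdet :: "real^2 \<Rightarrow> real" where "gdet p = g 1 1 p * g 2 2 p - g 1 2 p * g 1 2 p"

text \<open>\<open>R\<^sub>i = gdet \<cdot> g\<^sup>i\<^sup>j X\<^sub>j\<close>, the dual frame of \<open>X\<^sub>1, X\<^sub>2\<close> scaled by \<open>det g\<close>.\<close>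
definition R1 :: "real^2 \<Rightarrow> real^3" where "R1 p = g 2 2 p *\<^sub>R Xd X 1 p - g 1 2 p *\<^sub>R Xd X 2 p"
definition R2 :: "real^2 \<Rightarrow> real^3" where "R2 p = g 1 1 p *\<^sub>R Xd X 2 p - g 1 2 p *\<^sub>R Xd X 1 p"

lemma gdet_eq_inner_nvec: "gdet p = nvec p \<bullet> nvec p"
  unfolding gdet_def g_def nvec_def by (simp add: inner_cross_cross)

lemma gdet_eq_norm_nvec: "gdet p = (norm (nvec p))\<^sup>2"
  by (simp add: gdet_eq_inner_nvec power2_norm_eq_inner)

lemma gdet_nonzero: "p \<in> U \<Longrightarrow> gdet p \<noteq> 0"
  using nvec_nonzero gdet_eq_inner_nvec by simp

lemma det_gmat: "det (gmat X p) = gdet p"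
  by (simp add: det_2 gmat_def gdet_def g_def inner_commute)

lemma inner_Xd_R:
  "Xd X 1 p \<bullet> R1 p = gdet p" "Xd X 2 p \<bullet> R1 p = 0" "Xd X 1 p \<bullet> R2 p = 0" "Xd X 2 p \<bullet> R2 p = gdet p"
  unfolding R1_def R2_def gdet_def g_def by (simp_all add: inner_diff_right inner_commute algebra_simps)

lemma R1_eq_cross: "Xd X 2 p \<times> nvec p = R1 p"
  by (metis cross_cross_left cross_skew inner_commute minus_diff_eq nvec_def R1_def g_def)

lemma R2_eq_cross: "nvec p \<times> Xd X 1 p = R2 p"
  unfolding nvec_def R2_def g_def cross_cross_left by (simp add: inner_commute)

lemma ginv_eq:
  assumes "p \<in> U"
  shows "ginv X p = (\<chi> i j. if i = 1 \<and> j = 1 then g 2 2 p / gdet p else if i = 2 \<and> j = 2 then g 1 1 p / gdet p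
                           else - g 1 2 p / gdet p)"
proof -
  have entries: "gmat X p $ a $ b = g a b p" for a b by (simp add: gmat_def g_def)
  have "g 2 1 p = g 1 2 p" by (simp add: g_def inner_commute)
  then show ?thesis
    unfolding ginv_def using matrix_inv_2[of "gmat X p"] gdet_nonzero[OF assms] det_gmat entries
    by (simp cong: if_cong)
qed

lemma tangent_coord_1: "p \<in> U \<Longrightarrow> tangent_coord X p w 1 = (w \<bullet> R1 p) / gdet p"
  by (simp add: tangent_coord_def ginv_eq sum_2 R1_def inner_diff_right field_simps gdet_nonzero)

lemma tangent_coord_2: "p \<in> U \<Longrightarrow> tangent_coord X p w 2 = (w \<bullet> R2 p) / gdet p"
  by (simp add: tangent_coord_def ginv_eq sum_2 R2_def inner_diff_right field_simps gdet_nonzero)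

lemma tangent_expansion:
  assumes p: "p \<in> U" and w: "w \<bullet> nvec p = 0"
  shows "w = tangent_coord X p w 1 *\<^sub>R Xd X 1 p + tangent_coord X p w 2 *\<^sub>R Xd X 2 p"
  using cross_frame_tangent[of w "Xd X 1 p" "Xd X 2 p"] w gdet_nonzero[OF p]
  unfolding tangent_coord_1[OF p] tangent_coord_2[OF p] gdet_def R1_def R2_def g_def nvec_def
  by (simp add: inner_commute)

lemma sdiv_eq: "p \<in> U \<Longrightarrow>
    sdiv X V p = (pd V (axis 1 1) p \<bullet> R1 p + pd V (axis 2 1) p \<bullet> R2 p) / gdet p"
  by (simp add: sdiv_tangent_coord sum_2 tangent_coord_1 tangent_coord_2 add_divide_distrib)

lemma pd_nvec:
  "p \<in> U \<Longrightarrow> pd nvec v p = Xd X 1 p \<times> pd (Xd X 2) v p + pd (Xd X 1) v p \<times> Xd X 2 p"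
  using pd_cross[OF differentiable_Xd differentiable_Xd] unfolding nvec_def[abs_def] by blast

lemma differentiable_norm_nvec: "p \<in> U \<Longrightarrow> (\<lambda>q. norm (nvec q)) differentiable (at p)"
  using differentiable_chain_at[OF differentiable_nvec differentiable_norm_at[OF nvec_nonzero]]
  by (simp add: o_def)

lemma pd_norm_nvec:
  assumes p: "p \<in> U"
  shows "pd (\<lambda>q. norm (nvec q)) (axis k 1) p
    = (pd (Xd X 1) (axis k 1) p \<bullet> R1 p + pd (Xd X 2) (axis k 1) p \<bullet> R2 p) / norm (nvec p)"
proof -
  have "pd (\<lambda>q. norm (nvec q)) (axis k 1) p = (pd nvec (axis k 1) p \<bullet> nvec p) / norm (nvec p)"
    using pd_chain[OF differentiable_nvec[OF p] differentiable_norm_at[OF nvec_nonzero[OF p]]]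
      pd_norm[OF nvec_nonzero[OF p]] by simp
  also have "pd nvec (axis k 1) p \<bullet> nvec p
      = pd (Xd X 1) (axis k 1) p \<bullet> R1 p + pd (Xd X 2) (axis k 1) p \<bullet> R2 p"
    unfolding pd_nvec[OF p] R1_eq_cross[symmetric] R2_eq_cross[symmetric]
    by (simp add: inner_add_left inner_cross_assoc) (metis inner_commute inner_cross_assoc)
  finally show ?thesis .
qed

lemma pd_div_norm_nvec:
  assumes p: "p \<in> U" and f: "f differentiable (at p)"
  shows "(\<lambda>q. f q / norm (nvec q)) differentiable (at p)"
    and "pd (\<lambda>q. f q / norm (nvec q)) (axis k 1) p
       = pd f (axis k 1) p / norm (nvec p)
         - f p * (pd (Xd X 1) (axis k 1) p \<bullet> R1 p + pd (Xd X 2) (axis k 1) p \<bullet> R2 p) / (norm (nvec p))^3"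
proof -
  define m where "m = norm (nvec p)"
  have m: "m \<noteq> 0" using nvec_nonzero[OF p] unfolding m_def by simp
  have deriv: "((\<lambda>q. f q / norm (nvec q)) has_derivative
     (\<lambda>h. f p * - (inverse m * pd (\<lambda>q. norm (nvec q)) h p * inverse m) + pd f h p * inverse m)) (at p)"
    using has_derivative_mult[OF has_derivative_pd[OF f]
        Deriv.has_derivative_inverse[OF m[unfolded m_def] has_derivative_pd[OF differentiable_norm_nvec[OF p]]]]
    unfolding m_def by (simp add: divide_inverse)
  then show "(\<lambda>q. f q / norm (nvec q)) differentiable (at p)"
    unfolding differentiable_def by blast
  show "pd (\<lambda>q. f q / norm (nvec q)) (axis k 1) p
       = pd f (axis k 1) p / norm (nvec p)
         - f p * (pd (Xd X 1) (axis k 1) p \<bullet> R1 p + pd (Xd X 2) (axis k 1) p \<bullet> R2 p) / (norm (nvec p))^3"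
  proof -
    define S where "S = pd (Xd X 1) (axis k 1) p \<bullet> R1 p + pd (Xd X 2) (axis k 1) p \<bullet> R2 p"
    have "pd (\<lambda>q. f q / norm (nvec q)) (axis k 1) p
        = f p * - (inverse m * (S / m) * inverse m) + pd f (axis k 1) p * inverse m"
      using pd_eq[OF deriv] pd_norm_nvec[OF p, of k] unfolding m_def S_def by simp
    also have "\<dots> = pd f (axis k 1) p / m - f p * S / m^3"
      using m by (simp add: field_simps power3_eq_cube)
    finally show ?thesis unfolding m_def S_def .
  qed
qed

text \<open>The terms from differentiating \<open>1 / |n|\<close> cancel against those from \<open>X\<^sub>i\<^sub>j\<close>, because
  \<open>X\<^sub>1\<^sub>2 = X\<^sub>2\<^sub>1\<close>.\<close>
lemma sdiv_frame_field:
  assumes p: "p \<in> U" and f: "f differentiable (at p)" and h: "h differentiable (at p)"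
  shows "sdiv X (\<lambda>q. (f q / norm (nvec q)) *\<^sub>R Xd X 1 q - (h q / norm (nvec q)) *\<^sub>R Xd X 2 q) p
       = (pd f (axis 1 1) p - pd h (axis 2 1) p) / norm (nvec p)"
proof -
  define a where "a = (\<lambda>q. f q / norm (nvec q))"
  define b where "b = (\<lambda>q. h q / norm (nvec q))"
  have da: "a differentiable (at p)" and db: "b differentiable (at p)"
    unfolding a_def b_def using pd_div_norm_nvec(1)[OF p] f h by auto
  have pd_field: "pd (\<lambda>q. a q *\<^sub>R Xd X 1 q - b q *\<^sub>R Xd X 2 q) v p
      = (a p *\<^sub>R pd (Xd X 1) v p + pd a v p *\<^sub>R Xd X 1 p)
        - (b p *\<^sub>R pd (Xd X 2) v p + pd b v p *\<^sub>R Xd X 2 p)" for v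
    using pd_diff[of "\<lambda>q. a q *\<^sub>R Xd X 1 q" p "\<lambda>q. b q *\<^sub>R Xd X 2 q"] da db differentiable_Xd[OF p]
      pd_scaleR[OF da differentiable_Xd[OF p]] pd_scaleR[OF db differentiable_Xd[OF p]]
    by simp
  define m where "m = norm (nvec p)"
  have m: "m > 0" unfolding m_def using nvec_nonzero[OF p] by simp
  have gdet_m: "gdet p = m\<^sup>2" unfolding m_def using gdet_eq_norm_nvec .
  define X11 where "X11 = pd (Xd X 1) (axis 1 1) p"
  define X12 where "X12 = pd (Xd X 1) (axis 2 1) p"
  define X21 where "X21 = pd (Xd X 2) (axis 1 1) p"
  define X22 where "X22 = pd (Xd X 2) (axis 2 1) p"
  have pa: "pd a (axis 1 1) p = pd f (axis 1 1) p / m - f p * (X11 \<bullet> R1 p + X21 \<bullet> R2 p) / m^3"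
    unfolding a_def m_def X11_def X21_def using pd_div_norm_nvec(2)[OF p f] .
  have pb: "pd b (axis 2 1) p = pd h (axis 2 1) p / m - h p * (X12 \<bullet> R1 p + X22 \<bullet> R2 p) / m^3"
    unfolding b_def m_def X12_def X22_def using pd_div_norm_nvec(2)[OF p h] .
  have ab: "a p = f p / m" "b p = h p / m" unfolding a_def b_def m_def by simp_all
  have "sdiv X (\<lambda>q. a q *\<^sub>R Xd X 1 q - b q *\<^sub>R Xd X 2 q) p
    = ((a p * (X11 \<bullet> R1 p) + pd a (axis 1 1) p * gdet p - b p * (X21 \<bullet> R1 p))
       + (a p * (X12 \<bullet> R2 p) - b p * (X22 \<bullet> R2 p) - pd b (axis 2 1) p * gdet p)) / gdet p"
    unfolding sdiv_eq[OF p] pd_field X11_def X12_def X21_def X22_def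
    by (simp add: inner_add_left inner_diff_left inner_Xd_R)
  also have "\<dots> = (pd f (axis 1 1) p - pd h (axis 2 1) p) / m"
    using m pd_Xd_commute[OF p] unfolding pa pb ab gdet_m X12_def X21_def
    by (simp add: field_simps power3_eq_cube power2_eq_square)
  finally show ?thesis unfolding a_def b_def m_def .
qed

lemma sdiv_curl_field:
  assumes p: "p \<in> U" and dY: "Y differentiable (at p)"
    and dV: "\<And>i. (\<lambda>q. pd V (axis i 1) q) differentiable (at p)"
    and sym: "pd (\<lambda>q. pd V (axis 1 1) q) (axis 2 1) p = pd (\<lambda>q. pd V (axis 2 1) q) (axis 1 1) p"
  shows "sdiv X (\<lambda>q. ((Y q \<bullet> pd V (axis 2 1) q) / norm (nvec q)) *\<^sub>R Xd X 1 q
                    - ((Y q \<bullet> pd V (axis 1 1) q) / norm (nvec q)) *\<^sub>R Xd X 2 q) p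
       = (pd Y (axis 1 1) p \<bullet> pd V (axis 2 1) p - pd Y (axis 2 1) p \<bullet> pd V (axis 1 1) p) / norm (nvec p)"
  using sdiv_frame_field[OF p differentiable_inner[OF dY dV] differentiable_inner[OF dY dV]]
    pd_inner[OF dY dV] sym
  by simp

lemma Jrot_tanpart_eq:
  "Jrot X q (tanpart X q w)
    = (((- w) \<bullet> Xd X 2 q) / norm (nvec q)) *\<^sub>R Xd X 1 q - (((- w) \<bullet> Xd X 1 q) / norm (nvec q)) *\<^sub>R Xd X 2 q"
proof -
  have "Jrot X q (tanpart X q w) = inverse (norm (nvec q)) *\<^sub>R (nvec q \<times> w)"
    unfolding Jrot_def tanpart_def nu_eq
    by (simp add: Cross3.right_diff_distrib cross_mult_right cross_mult_left)
  also have "nvec q \<times> w = (Xd X 1 q \<bullet> w) *\<^sub>R Xd X 2 q - (Xd X 2 q \<bullet> w) *\<^sub>R Xd X 1 q"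
    unfolding nvec_def cross_cross_left ..
  finally show ?thesis
    by (simp add: inner_commute divide_inverse scaleR_diff_right algebra_simps)
qed

lemma Xd_inner_nu: "p \<in> U \<Longrightarrow> Xd X i p \<bullet> nu X p = 0"
  using exhaust_2[of i] by (auto simp: nu_eq nvec_def dot_cross_self)

lemma pd_nu_inner_nu: assumes p: "p \<in> U" shows "pd (nu X) (axis i 1) p \<bullet> nu X p = 0"
proof -
  have "pd (\<lambda>q. nu X q \<bullet> nu X q) (axis i 1) p = pd (\<lambda>q. 1::real) (axis i 1) p"
    using pd_cong_open[OF U_open p, of "\<lambda>q. nu X q \<bullet> nu X q" "\<lambda>q. 1"] norm_nu
    by (simp add: norm_eq_1)
  then show ?thesis
    using pd_inner[OF differentiable_nu[OF p] differentiable_nu[OF p]] by (simp add: inner_commute)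
qed

lemma tangent_iff_inner_nvec: "p \<in> U \<Longrightarrow> w \<bullet> nvec p = 0 \<longleftrightarrow> w \<bullet> nu X p = 0"
  using nvec_nonzero[of p] by (simp add: nu_eq)

lemma inner_matrix_tangent_coord:
  assumes p: "p \<in> U" and v: "\<And>i. v i \<bullet> nvec p = 0"
  shows "(\<chi> i k. v i \<bullet> w k) = (\<chi> i j. tangent_coord X p (v i) j) ** (\<chi> j k. Xd X j p \<bullet> w k)"
proof -
  have "v i \<bullet> w k = tangent_coord X p (v i) 1 * (Xd X 1 p \<bullet> w k) + tangent_coord X p (v i) 2 * (Xd X 2 p \<bullet> w k)"
    for i k
    using arg_cong[OF tangent_expansion[OF p v], of "\<lambda>x. x \<bullet> w k"] by (simp add: inner_add_left)
  then show ?thesis by (simp add: vec_eq_iff matrix_matrix_mult_def sum_2)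
qed

lemma gauss_curv_tangent_coord:
  assumes p: "p \<in> U"
  shows "gauss_curv X p = det (\<chi> i j. tangent_coord X p (pd (nu X) (axis i 1) p) j)"
proof -
  have "(\<chi> i j. pd (nu X) (axis i 1) p \<bullet> Xd X j p)
      = (\<chi> i j. tangent_coord X p (pd (nu X) (axis i 1) p) j) ** gmat X p"
    using inner_matrix_tangent_coord[OF p, of "\<lambda>i. pd (nu X) (axis i 1) p" "\<lambda>k. Xd X k p"]
      pd_nu_inner_nu[OF p] tangent_iff_inner_nvec[OF p]
    by (simp add: gmat_def)
  then have "det (\<chi> i j. - (pd (nu X) (axis i 1) p \<bullet> Xd X j p))
      = det (\<chi> i j. tangent_coord X p (pd (nu X) (axis i 1) p) j) * gdet p"
    by (metis (no_types, lifting) det_2 det_gmat det_mul mult_minus_left mult_minus_right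
        minus_mult_minus vec_lambda_beta)
  then show ?thesis unfolding gauss_curv_def det_gmat using gdet_nonzero[OF p] by simp
qed

end

section \<open>The anisotropy\<close>

lemma pd_radial_homogeneous_zero:
  assumes hom: "\<And>c. c > 0 \<Longrightarrow> f (c *\<^sub>R y) = f y" and df: "f differentiable (at y)"
  shows "pd f y y = 0"
proof -
  have line: "((\<lambda>t::real. y + t *\<^sub>R y) has_derivative (\<lambda>s. s *\<^sub>R y)) (at 0)"
    by (auto intro!: derivative_eq_intros)
  have along: "((\<lambda>t. f (y + t *\<^sub>R y)) has_derivative (\<lambda>s. pd f (s *\<^sub>R y) y)) (at 0)"
    using has_derivative_compose[OF line, of f] has_derivative_pd[OF df] by simp
  have "((\<lambda>t. f y) has_derivative (\<lambda>s. pd f (s *\<^sub>R y) y)) (at (0::real))"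
  proof (rule has_derivative_transform_within_open[OF along open_ball[of 0 1]])
    show "f (y + t *\<^sub>R y) = f y" if "t \<in> ball 0 1" for t
      using hom[of "1 + t"] that by (simp add: abs_less_iff algebra_simps)
  qed simp
  then have "(\<lambda>s. pd f (s *\<^sub>R y) y) = (\<lambda>s. 0)"
    using has_derivative_unique has_derivative_const by blast
  then show ?thesis by (metis scaleR_one)
qed

lemma has_derivative_inverse_norm:
  assumes "(y::'a::euclidean_space) \<noteq> 0"
  shows "((\<lambda>z. inverse (norm z)) has_derivative (\<lambda>v. - (v \<bullet> y) / (norm y)^3)) (at y)"
proof -
  have "((\<lambda>z. inverse (norm z)) has_derivative
      (\<lambda>v. - (inverse (norm y) * (v \<bullet> y / norm y) * inverse (norm y)))) (at y)"
    using Deriv.has_derivative_inverse[of norm y, OF _ has_derivative_pd[OF differentiable_norm_at[OF assms]]]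
      assms pd_norm[OF assms] by simp
  then show ?thesis by (simp add: power3_eq_cube divide_inverse mult_ac)
qed

lemma mult_vec_row: "((A::real^'n^'m) *v w) $ m = A$m \<bullet> w"
  by (simp add: matrix_vector_mult_def inner_vec_def)

locale anisotropy =
  fixes gam :: "real^3 \<Rightarrow> real"
  assumes gam0_C3: "Ck 3 (- {0}) (gam0 gam)"
begin

lemma gam0_unit: "norm y = 1 \<Longrightarrow> gam0 gam y = gam y"
  by (simp add: gam0_def)

lemma gamt_unit: "norm y = 1 \<Longrightarrow> gamt gam y = gam y"
  by (simp add: gamt_def)

lemma gamt_eq: "gamt gam = (\<lambda>x. norm x * gam0 gam x)"
  by (rule ext) (simp add: gamt_def gam0_def)

lemma Ck_gamt: "Ck 3 (- {0}) (gamt gam)"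
proof -
  have "Ck 3 (- {0::real^3}) (\<lambda>x. norm x)"
    using Ck_norm[OF open_nonzero _ Ck_id[OF open_nonzero]] by simp
  then show ?thesis using Ck_mult[OF open_nonzero _ gam0_C3] gamt_eq by simp
qed

lemma Ck_pd_gam0: "Ck 2 (- {0}) (\<lambda>x. pd (gam0 gam) (axis k 1) x)"
  using Ck_pd[OF gam0_C3[unfolded numeral_3_eq_3], of "axis k 1"] by (simp add: numeral_2_eq_2)

lemma Ck_pd_gamt: "Ck 2 (- {0}) (\<lambda>x. pd (gamt gam) (axis k 1) x)"
  using Ck_pd[OF Ck_gamt[unfolded numeral_3_eq_3], of "axis k 1"] by (simp add: numeral_2_eq_2)

lemma Ck_grad_gamt: "Ck 2 (- {0}) (grad3 (gamt gam))"
  using Ck_vec[OF open_nonzero Ck_pd_gamt] unfolding grad3_def[abs_def] .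

lemma differentiable_gam0: "y \<noteq> 0 \<Longrightarrow> gam0 gam differentiable (at y)"
  using Ck_diff_at[OF gam0_C3[unfolded numeral_3_eq_3] open_nonzero] by simp

lemma differentiable_gamt: "y \<noteq> 0 \<Longrightarrow> gamt gam differentiable (at y)"
  using Ck_diff_at[OF Ck_gamt[unfolded numeral_3_eq_3] open_nonzero] by simp

lemma differentiable_pd_gam0: "y \<noteq> 0 \<Longrightarrow> (\<lambda>z. pd (gam0 gam) (axis k 1) z) differentiable (at y)"
  using Ck_diff_at[OF Ck_pd_gam0[unfolded numeral_2_eq_2] open_nonzero] by simp

lemma differentiable_pd_gamt: "y \<noteq> 0 \<Longrightarrow> (\<lambda>z. pd (gamt gam) (axis k 1) z) differentiable (at y)"
  using Ck_diff_at[OF Ck_pd_gamt[unfolded numeral_2_eq_2] open_nonzero] by simp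

lemma differentiable_grad_gamt: "y \<noteq> 0 \<Longrightarrow> grad3 (gamt gam) differentiable (at y)"
  using Ck_diff_at[OF Ck_grad_gamt[unfolded numeral_2_eq_2] open_nonzero] by simp

lemma pd_gamt:
  assumes y: "y \<noteq> 0"
  shows "pd (gamt gam) v y = (v \<bullet> y) / norm y * gam0 gam y + norm y * pd (gam0 gam) v y"
  using pd_mult[OF differentiable_norm_at[OF y] differentiable_gam0[OF y]] pd_norm[OF y]
  by (simp add: gamt_eq)

lemma grad_gamt_inner_unit:
  assumes y: "norm y = 1"
  shows "grad3 (gamt gam) y \<bullet> y = gam y"
proof -
  have y0: "y \<noteq> 0" using y by auto
  have "pd (gam0 gam) y y = 0"
    using pd_radial_homogeneous_zero[OF _ differentiable_gam0[OF y0]] y0 by (simp add: gam0_def)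
  then show ?thesis
    using grad3_inner[OF differentiable_gamt[OF y0]] pd_gamt[OF y0, of y] gam0_unit[OF y] y
    by (simp add: power2_norm_eq_inner[symmetric])
qed

end

context anisotropy
begin

lemma hess_gamt:
  assumes y1: "norm y = 1"
  shows "hess3 (gamt gam) y $ m $ k = (if m = k then 1 else 0) * gam0 gam y - y$m * y$k * gam0 gam y
     + y$k * pd (gam0 gam) (axis m 1) y + y$m * pd (gam0 gam) (axis k 1) y + hess3 (gam0 gam) y $ m $ k"
proof -
  have y: "y \<noteq> 0" using y1 by auto
  let ?g = "gam0 gam"
  have dc: "(\<lambda>z::real^3. z$k) differentiable (at y)" by (simp add: differentiable_nth)
  have di: "(\<lambda>z. inverse (norm z)) differentiable (at y)"
    using has_derivative_inverse_norm[OF y] unfolding differentiable_def by blast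
  define T where "T = (\<lambda>z. (z$k * inverse (norm z)) * ?g z + norm z * pd ?g (axis k 1) z)"
  have "pd (gamt gam) (axis k 1) z = T z" if "z \<in> - {0}" for z
    using pd_gamt[of z "axis k 1"] that unfolding T_def by (simp add: inner_axis' divide_inverse)
  then have "hess3 (gamt gam) y $ m $ k = pd T (axis m 1) y"
    using pd_cong_open[OF open_nonzero, of y "\<lambda>z. pd (gamt gam) (axis k 1) z" T] y
    by (simp add: hess3_def)
  also have "\<dots> = (y$k * inverse (norm y)) * pd ?g (axis m 1) y
      + pd (\<lambda>z. z$k * inverse (norm z)) (axis m 1) y * ?g y
      + (norm y * pd (\<lambda>z. pd ?g (axis k 1) z) (axis m 1) y + pd norm (axis m 1) y * pd ?g (axis k 1) y)"
  proof -
    have d1: "(\<lambda>z. z$k * inverse (norm z)) differentiable (at y)" using dc di by simp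
    show ?thesis unfolding T_def
      using pd_add[of "\<lambda>z. (z$k * inverse (norm z)) * ?g z" y "\<lambda>z. norm z * pd ?g (axis k 1) z"]
        pd_mult[OF d1 differentiable_gam0[OF y]]
        pd_mult[OF differentiable_norm_at[OF y] differentiable_pd_gam0[OF y]]
        d1 differentiable_gam0[OF y] differentiable_norm_at[OF y] differentiable_pd_gam0[OF y]
      by simp
  qed
  also have "pd (\<lambda>z. z$k * inverse (norm z)) (axis m 1) y = (if m = k then 1 else 0) - y$k * y$m"
  proof -
    have "pd (\<lambda>z::real^3. z$k) v y = v$k" for v
      using pd_nth[of "\<lambda>z. z" y k v] by (simp add: pd_ident)
    then show ?thesis
      using pd_mult[OF dc di, of "axis m 1"] pd_eq[OF has_derivative_inverse_norm[OF y]] y1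
      by (simp add: inner_axis') (simp add: axis_def)
  qed
  finally show ?thesis
    using y1 pd_norm[OF y, of "axis m 1"] by (simp add: hess3_def inner_axis' algebra_simps)
qed

lemma pd_grad_gamt_axis:
  assumes y: "y \<noteq> 0"
  shows "pd (grad3 (gamt gam)) (axis m 1) y = hess3 (gamt gam) y $ m"
proof -
  have "pd (grad3 (gamt gam)) (axis m 1) y = (\<chi> k. pd (\<lambda>x. pd (gamt gam) (axis k 1) x) (axis m 1) y)"
    unfolding grad3_def[abs_def] by (rule pd_vec) (rule differentiable_pd_gamt[OF y])
  then show ?thesis by (simp add: hess3_def vec_eq_iff)
qed

text \<open>On the tangent plane of the unit sphere, the Hessian of the one-homogeneous extension is
  \<open>D\<^sup>2\<gamma> + \<gamma> I\<close>.\<close>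
lemma inner_hess_gamt_tangent:
  assumes n: "norm n = 1" and u: "u \<bullet> n = 0" and w: "w \<bullet> n = 0"
  shows "u \<bullet> (hess3 (gamt gam) n *v w) = u \<bullet> (normal_extension n (hess3 (gam0 gam) n) (gam n) *v w)"
proof -
  have nn: "n \<bullet> n = 1" using n by (simp add: norm_eq_1)
  define a where "a = (\<chi> m. pd (gam0 gam) (axis m 1) n)"
  have "u \<bullet> (hess3 (gamt gam) n *v w) = (u \<bullet> w) * gam0 gam n - (u \<bullet> n) * (n \<bullet> w) * gam0 gam n
      + (n \<bullet> w) * (u \<bullet> a) + (u \<bullet> n) * (w \<bullet> a) + u \<bullet> (hess3 (gam0 gam) n *v w)"
    by (simp add: hess_gamt[OF n] a_def matrix_vector_mult_def inner_vec_def sum_3 algebra_simps)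
  also have "\<dots> = u \<bullet> (hess3 (gam0 gam) n *v w) + gam n * (u \<bullet> w)"
    using u w gam0_unit[OF n] by (simp add: inner_commute)
  finally show ?thesis using inner_normal_extension_tangent[OF nn u w] by simp
qed

end

section \<open>The Cahn--Hoffman field along a patch\<close>

locale anisotropic_patch = regular_patch X U + anisotropy gam
  for X :: "real^2 \<Rightarrow> real^3" and U :: "(real^2) set" and gam :: "real^3 \<Rightarrow> real"
begin

lemma Ck_xi: "Ck 2 U (xi gam X)"
proof -
  have "nu X ` U \<subseteq> - {0}" using nu_nonzero by auto
  then show ?thesis
    using Ck_comp[OF U_open open_nonzero Ck_grad_gamt Ck_nu] unfolding xi_def[abs_def] by blast
qed

lemma differentiable_xi: "p \<in> U \<Longrightarrow> xi gam X differentiable (at p)"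
  using Ck_diff_at[OF Ck_xi[unfolded numeral_2_eq_2] U_open] .

lemma differentiable_pd_xi: "p \<in> U \<Longrightarrow> (\<lambda>q. pd (xi gam X) (axis i 1) q) differentiable (at p)"
  using Ck_diff_at[OF Ck_pd[OF Ck_xi[unfolded numeral_2_eq_2], of "axis i 1"] U_open] by simp

lemma pd_xi_commute: "p \<in> U \<Longrightarrow> pd (\<lambda>q. pd (xi gam X) (axis 1 1) q) (axis 2 1) p
                                = pd (\<lambda>q. pd (xi gam X) (axis 2 1) q) (axis 1 1) p"
  using pd_commute[OF U_open _ differentiable_xi, of p "axis 1 1" "axis 2 1"]
    differentiable_pd_xi[of p 1] differentiable_pd_xi[of p 2] by blast

lemma xi_inner_nu: "p \<in> U \<Longrightarrow> xi gam X p \<bullet> nu X p = gam (nu X p)"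
  unfolding xi_def using grad_gamt_inner_unit norm_nu by blast

lemma pd_xi_inner_nu:
  assumes p: "p \<in> U"
  shows "pd (xi gam X) (axis k 1) p \<bullet> nu X p = 0"
proof -
  have "pd (\<lambda>q. xi gam X q \<bullet> nu X q) (axis k 1) p = pd (\<lambda>q. gamt gam (nu X q)) (axis k 1) p"
    using pd_cong_open[OF U_open p, of "\<lambda>q. xi gam X q \<bullet> nu X q" "\<lambda>q. gamt gam (nu X q)"]
      xi_inner_nu gamt_unit[OF norm_nu]
    by simp
  moreover have "pd (\<lambda>q. gamt gam (nu X q)) (axis k 1) p = xi gam X p \<bullet> pd (nu X) (axis k 1) p"
    using pd_chain[OF differentiable_nu[OF p] differentiable_gamt[OF nu_nonzero[OF p]]]
      grad3_inner[OF differentiable_gamt[OF nu_nonzero[OF p]]]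
    by (simp add: xi_def)
  ultimately show ?thesis
    using pd_inner[OF differentiable_xi[OF p] differentiable_nu[OF p]] by simp
qed

lemma pd_xi_inner_nvec: "p \<in> U \<Longrightarrow> pd (xi gam X) (axis k 1) p \<bullet> nvec p = 0"
  using pd_xi_inner_nu tangent_iff_inner_nvec by blast

lemma pd_xi_expansion:
  "p \<in> U \<Longrightarrow> pd (xi gam X) (axis i 1) p
     = tangent_coord X p (pd (xi gam X) (axis i 1) p) 1 *\<^sub>R Xd X 1 p
       + tangent_coord X p (pd (xi gam X) (axis i 1) p) 2 *\<^sub>R Xd X 2 p"
  using tangent_expansion pd_xi_inner_nvec by blast

lemma Lam_eq_trace:
  "Lam gam X p = - (tangent_coord X p (pd (xi gam X) (axis 1 1) p) 1
                    + tangent_coord X p (pd (xi gam X) (axis 2 1) p) 2)"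
  by (simp add: Lam_def sdiv_tangent_coord sum_2)

lemma cross_pd_xi_trace_det:
  assumes p: "p \<in> U"
  shows "pd (xi gam X) (axis 1 1) p \<times> Xd X 2 p + Xd X 1 p \<times> pd (xi gam X) (axis 2 1) p
           = - Lam gam X p *\<^sub>R nvec p"
    and "pd (xi gam X) (axis 1 1) p \<times> pd (xi gam X) (axis 2 1) p
           = det (\<chi> i j. tangent_coord X p (pd (xi gam X) (axis i 1) p) j) *\<^sub>R nvec p"
proof -
  define c where "c i j = tangent_coord X p (pd (xi gam X) (axis i 1) p) j" for i j
  have e: "pd (xi gam X) (axis i 1) p = c i 1 *\<^sub>R Xd X 1 p + c i 2 *\<^sub>R Xd X 2 p" for i
    unfolding c_def by (rule pd_xi_expansion[OF p])
  show "pd (xi gam X) (axis 1 1) p \<times> Xd X 2 p + Xd X 1 p \<times> pd (xi gam X) (axis 2 1) p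
      = - Lam gam X p *\<^sub>R nvec p"
    unfolding Lam_eq_trace c_def[symmetric] unfolding e cross_trace_frame nvec_def by simp
  show "pd (xi gam X) (axis 1 1) p \<times> pd (xi gam X) (axis 2 1) p
      = det (\<chi> i j. tangent_coord X p (pd (xi gam X) (axis i 1) p) j) *\<^sub>R nvec p"
    unfolding c_def[symmetric] unfolding e cross_det_frame nvec_def det_2 by simp
qed

end

context anisotropic_patch
begin

lemma dxi_add_Lam_Jrot:
  assumes q: "q \<in> U"
  shows "dxi_apply gam X q (Jrot X q (tanpart X q w)) + Lam gam X q *\<^sub>R Jrot X q (tanpart X q w)
       = ((w \<bullet> pd (xi gam X) (axis 2 1) q) / norm (nvec q)) *\<^sub>R Xd X 1 q
         - ((w \<bullet> pd (xi gam X) (axis 1 1) q) / norm (nvec q)) *\<^sub>R Xd X 2 q"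
proof -
  define c where "c i j = tangent_coord X q (pd (xi gam X) (axis i 1) q) j" for i j
  have e: "pd (xi gam X) (axis i 1) q = c i 1 *\<^sub>R Xd X 1 q + c i 2 *\<^sub>R Xd X 2 q" for i
    unfolding c_def by (rule pd_xi_expansion[OF q])
  define a where "a = ((- w) \<bullet> Xd X 2 q) / norm (nvec q)"
  define b where "b = ((- w) \<bullet> Xd X 1 q) / norm (nvec q)"
  have J: "Jrot X q (tanpart X q w) = a *\<^sub>R Xd X 1 q - b *\<^sub>R Xd X 2 q"
    unfolding a_def b_def by (rule Jrot_tanpart_eq)
  have "dxi_apply gam X q (a *\<^sub>R Xd X 1 q - b *\<^sub>R Xd X 2 q)
      = a *\<^sub>R pd (xi gam X) (axis 1 1) q - b *\<^sub>R pd (xi gam X) (axis 2 1) q"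
    using gdet_nonzero[OF q]
    by (simp add: dxi_apply_tangent_coord sum_2 tangent_coord_1[OF q] tangent_coord_2[OF q]
        inner_diff_left inner_Xd_R)
  moreover have "(w \<bullet> pd (xi gam X) (axis i 1) q) / norm (nvec q) = - (c i 1 * b + c i 2 * a)" for i
    unfolding e a_def b_def by (simp add: inner_add_right add_divide_distrib)
  moreover have "a *\<^sub>R (c11 *\<^sub>R u + c12 *\<^sub>R v) - b *\<^sub>R (c21 *\<^sub>R u + c22 *\<^sub>R v) + (- (c11 + c22)) *\<^sub>R (a *\<^sub>R u - b *\<^sub>R v)
      = (- (c21 * b + c22 * a)) *\<^sub>R u - (- (c11 * b + c12 * a)) *\<^sub>R v" for c11 c12 c21 c22 and u v :: "real^3"
    by (simp add: algebra_simps)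
  ultimately show ?thesis
    unfolding J Lam_eq_trace c_def[symmetric] unfolding e by simp
qed

lemma differentiable_X_cross_xi: "p \<in> U \<Longrightarrow> (\<lambda>q. X q \<times> xi gam X q) differentiable (at p)"
  using differentiable_cross[OF differentiable_X differentiable_xi] .

lemma pd_X_cross_xi:
  "p \<in> U \<Longrightarrow> pd (\<lambda>q. X q \<times> xi gam X q) (axis k 1) p
     = X p \<times> pd (xi gam X) (axis k 1) p + Xd X k p \<times> xi gam X p"
  using pd_cross[OF differentiable_X differentiable_xi] pd_X by simp

lemma sdiv_Jrot_X_cross_xi:
  assumes p: "p \<in> U"
  shows "sdiv X (\<lambda>p. Jrot X p (tanpart X p (X p \<times> xi gam X p))) p
       = 2 * gam (nu X p) + Lam gam X p * supp X p"
proof -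
  define Y where "Y q = - (X q \<times> xi gam X q)" for q
  have dY: "Y differentiable (at p)"
    unfolding Y_def using differentiable_minus[OF differentiable_X_cross_xi[OF p]] .
  have pd_Y: "pd Y (axis k 1) p = - (X p \<times> pd (xi gam X) (axis k 1) p + Xd X k p \<times> xi gam X p)" for k
    unfolding Y_def using pd_minus[OF differentiable_X_cross_xi[OF p]] pd_X_cross_xi[OF p] by simp
  have "sdiv X (\<lambda>p. Jrot X p (tanpart X p (X p \<times> xi gam X p))) p
      = sdiv X (\<lambda>q. ((Y q \<bullet> pd X (axis 2 1) q) / norm (nvec q)) *\<^sub>R Xd X 1 q
                    - ((Y q \<bullet> pd X (axis 1 1) q) / norm (nvec q)) *\<^sub>R Xd X 2 q) p"
    by (rule sdiv_cong[OF p]) (simp add: Jrot_tanpart_eq Y_def pd_X)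
  also have "\<dots> = (pd Y (axis 1 1) p \<bullet> Xd X 2 p - pd Y (axis 2 1) p \<bullet> Xd X 1 p) / norm (nvec p)"
    using sdiv_curl_field[OF p dY, of X] differentiable_Xd[OF p] pd_Xd_commute[OF p]
    unfolding Xd_eq[symmetric] pd_X by simp
  also have "pd Y (axis 1 1) p \<bullet> Xd X 2 p - pd Y (axis 2 1) p \<bullet> Xd X 1 p
      = 2 * (xi gam X p \<bullet> nvec p)
        - X p \<bullet> (pd (xi gam X) (axis 1 1) p \<times> Xd X 2 p + Xd X 1 p \<times> pd (xi gam X) (axis 2 1) p)"
  proof -
    have "(- (X0 \<times> x1 + a1 \<times> z)) \<bullet> a2 - (- (X0 \<times> x2 + a2 \<times> z)) \<bullet> a1
        = 2 * (z \<bullet> (a1 \<times> a2)) - X0 \<bullet> (x1 \<times> a2 + a1 \<times> x2)" for X0 z a1 a2 x1 x2 :: "real^3"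
      by (simp add: cross3_simps)
    then show ?thesis unfolding pd_Y nvec_def .
  qed
  also have "\<dots> = 2 * (xi gam X p \<bullet> nvec p) + Lam gam X p * (X p \<bullet> nvec p)"
    unfolding cross_pd_xi_trace_det(1)[OF p] by simp
  also have "\<dots> / norm (nvec p) = 2 * (xi gam X p \<bullet> nu X p) + Lam gam X p * (X p \<bullet> nu X p)"
    by (simp add: inner_nu add_divide_distrib)
  finally show ?thesis using xi_inner_nu[OF p] by (simp add: supp_def)
qed

lemma pd_xi_inner_hess:
  assumes p: "p \<in> U"
  shows "pd (xi gam X) (axis i 1) p \<bullet> w = pd (nu X) (axis i 1) p \<bullet> (hess3 (gamt gam) (nu X p) *v w)"
proof -
  let ?N = "pd (nu X) (axis i 1) p" and ?H = "hess3 (gamt gam) (nu X p)"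
  have y: "nu X p \<noteq> 0" using nu_nonzero[OF p] .
  have "pd (xi gam X) (axis i 1) p = pd (grad3 (gamt gam)) ?N (nu X p)"
    using pd_chain[OF differentiable_nu[OF p] differentiable_grad_gamt[OF y]]
    unfolding xi_def[abs_def] .
  also have "\<dots> = (\<Sum>m\<in>UNIV. ?N$m *\<^sub>R ?H$m)"
    using pd_expand_axis[OF differentiable_grad_gamt[OF y]] pd_grad_gamt_axis[OF y] by simp
  finally show ?thesis
    by (simp add: sum_3 inner_vec_def[of ?N] mult_vec_row inner_add_left)
qed

lemma det_dxi:
  assumes p: "p \<in> U"
  shows "det (\<chi> i j. tangent_coord X p (pd (xi gam X) (axis i 1) p) j) = gauss_curv X p / KW gam (nu X p)"
proof -
  define n where "n = nu X p"
  define M where "M = normal_extension n (hess3 (gam0 gam) n) (gam n)"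
  have n: "norm n = 1" "n \<bullet> n = 1" unfolding n_def using norm_nu[OF p] by (auto simp: norm_eq_1)
  have Xn: "Xd X k p \<bullet> n = 0" for k unfolding n_def using Xd_inner_nu[OF p] .
  have Nn: "pd (nu X) (axis i 1) p \<bullet> n = 0" for i unfolding n_def using pd_nu_inner_nu[OF p] .
  have tangent: "w \<bullet> nvec p = 0" if "w \<bullet> n = 0" for w
    using that tangent_iff_inner_nvec[OF p] unfolding n_def by blast
  have xi_M: "pd (xi gam X) (axis i 1) p \<bullet> Xd X k p = pd (nu X) (axis i 1) p \<bullet> (M *v Xd X k p)" for i k
    using pd_xi_inner_hess[OF p] inner_hess_gamt_tangent[OF n(1) Nn Xn] unfolding M_def n_def by simp
  define L where "L = (\<chi> i k. pd (xi gam X) (axis i 1) p \<bullet> Xd X k p)"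
  define C where "C = (\<chi> i j. tangent_coord X p (pd (xi gam X) (axis i 1) p) j)"
  define S where "S = (\<chi> i j. tangent_coord X p (pd (nu X) (axis i 1) p) j)"
  define B where "B = (\<chi> j k. Xd X j p \<bullet> (M *v Xd X k p))"
  have "L = C ** gmat X p"
    using inner_matrix_tangent_coord[OF p, of "\<lambda>i. pd (xi gam X) (axis i 1) p" "\<lambda>k. Xd X k p"]
      pd_xi_inner_nvec[OF p]
    unfolding L_def C_def by (simp add: gmat_def)
  then have "det C * gdet p = det L" by (simp add: det_mul det_gmat)
  also have "L = S ** B"
    unfolding L_def S_def B_def xi_M
    using inner_matrix_tangent_coord[OF p, of "\<lambda>i. pd (nu X) (axis i 1) p" "\<lambda>k. M *v Xd X k p"]
      tangent[OF Nn] by simp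
  also have "det (S ** B) = gauss_curv X p * (gdet p * det M)"
  proof -
    have "det B = gdet p * det M"
      using det_tangent_block[of "\<lambda>k. Xd X k p" n M, OF Xn n(2)] normal_extension_normal[OF n(2)]
        normal_extension_tangent[OF n(2) Xn] det_gmat
      unfolding M_def B_def gmat_def by simp
    then show ?thesis unfolding det_mul S_def gauss_curv_tangent_coord[OF p] by simp
  qed
  finally have "det C * gdet p = gauss_curv X p * (gdet p * det M)" .
  then show ?thesis
    using gdet_nonzero[OF p] unfolding C_def KW_def det_hess_gam_def M_def normal_extension_def n_def
    by simp
qed

lemma sdiv_dxi_add_Lam_Jrot_X_cross_xi:
  assumes p: "p \<in> U"
  shows "sdiv X (\<lambda>p. dxi_apply gam X p (Jrot X p (tanpart X p (X p \<times> xi gam X p)))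
                   + Lam gam X p *\<^sub>R Jrot X p (tanpart X p (X p \<times> xi gam X p))) p
       = 2 * supp X p * gauss_curv X p / KW gam (nu X p) + Lam gam X p * gam (nu X p)"
proof -
  define Y where "Y q = X q \<times> xi gam X q" for q
  have "sdiv X (\<lambda>p. dxi_apply gam X p (Jrot X p (tanpart X p (X p \<times> xi gam X p)))
                   + Lam gam X p *\<^sub>R Jrot X p (tanpart X p (X p \<times> xi gam X p))) p
      = sdiv X (\<lambda>q. ((Y q \<bullet> pd (xi gam X) (axis 2 1) q) / norm (nvec q)) *\<^sub>R Xd X 1 q
                    - ((Y q \<bullet> pd (xi gam X) (axis 1 1) q) / norm (nvec q)) *\<^sub>R Xd X 2 q) p"
    by (rule sdiv_cong[OF p]) (simp add: dxi_add_Lam_Jrot Y_def)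
  also have "\<dots> = (pd Y (axis 1 1) p \<bullet> pd (xi gam X) (axis 2 1) p
                   - pd Y (axis 2 1) p \<bullet> pd (xi gam X) (axis 1 1) p) / norm (nvec p)"
    using sdiv_curl_field[OF p _ differentiable_pd_xi[OF p] pd_xi_commute[OF p]]
      differentiable_X_cross_xi[OF p] unfolding Y_def[abs_def] by simp
  also have "pd Y (axis 1 1) p \<bullet> pd (xi gam X) (axis 2 1) p - pd Y (axis 2 1) p \<bullet> pd (xi gam X) (axis 1 1) p
      = 2 * (X p \<bullet> (pd (xi gam X) (axis 1 1) p \<times> pd (xi gam X) (axis 2 1) p))
        - xi gam X p \<bullet> (pd (xi gam X) (axis 1 1) p \<times> Xd X 2 p + Xd X 1 p \<times> pd (xi gam X) (axis 2 1) p)"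
  proof -
    have "(X0 \<times> x1 + a1 \<times> z) \<bullet> x2 - (X0 \<times> x2 + a2 \<times> z) \<bullet> x1
        = 2 * (X0 \<bullet> (x1 \<times> x2)) - z \<bullet> (x1 \<times> a2 + a1 \<times> x2)" for X0 z a1 a2 x1 x2 :: "real^3"
      by (simp add: cross3_simps)
    then show ?thesis unfolding Y_def[abs_def] pd_X_cross_xi[OF p] .
  qed
  also have "\<dots> = 2 * (gauss_curv X p / KW gam (nu X p)) * (X p \<bullet> nvec p)
                  + Lam gam X p * (xi gam X p \<bullet> nvec p)"
    unfolding cross_pd_xi_trace_det[OF p] det_dxi[OF p] by simp
  also have "\<dots> / norm (nvec p)
      = 2 * (gauss_curv X p / KW gam (nu X p)) * (X p \<bullet> nu X p) + Lam gam X p * (xi gam X p \<bullet> nu X p)"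
    by (simp add: inner_nu add_divide_distrib)
  finally show ?thesis using xi_inner_nu[OF p] by (simp add: supp_def)
qed

end

theorem lemma0p3:
  fixes X :: "real^2 \<Rightarrow> real^3" and U :: "(real^2) set" and gam :: "real^3 \<Rightarrow> real"
  assumes U_open: "open U"
    and X_smooth: "smooth_on U X"
    and immersion: "\<forall>p\<in>U. Xd X 1 p \<times> Xd X 2 p \<noteq> 0"
    and gam_pos: "\<forall>n. norm n = 1 \<longrightarrow> gam n > 0"
    and gam_C3: "Ck 3 (- {0}) (gam0 gam)"
  shows "(\<forall>p\<in>U. sdiv X (\<lambda>p. Jrot X p (tanpart X p (X p \<times> xi gam X p))) p
              = 2 * gam (nu X p) + Lam gam X p * supp X p)
       \<and> ((\<exists>c. \<forall>p\<in>U. Lam gam X p = c) \<longrightarrow>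
          (\<forall>p\<in>U. sdiv X (\<lambda>p. dxi_apply gam X p (Jrot X p (tanpart X p (X p \<times> xi gam X p)))
                              + Lam gam X p *\<^sub>R Jrot X p (tanpart X p (X p \<times> xi gam X p))) p
                 = 2 * supp X p * gauss_curv X p / KW gam (nu X p) + Lam gam X p * gam (nu X p)))"
proof -
  interpret anisotropic_patch X U gam
    by unfold_locales (fact U_open, fact X_smooth, fact immersion, fact gam_C3)
  show ?thesis
    using sdiv_Jrot_X_cross_xi sdiv_dxi_add_Lam_Jrot_X_cross_xi by blast
qed

end
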